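(* Let $d\ge 1$ and $0<p,q<\infty$. Let $\psi:[1,\infty)\to(0,\infty)$ be a decreasing function with $\lim_{t\to\infty}\psi(t)=0$, extended by $\psi(0):=\psi(1)$, such that $\psi^p$ satisfies the $\Delta_2$-condition: there is a constant $K>0$ with $\psi^p(t)\le K\,\psi^p(2t)$ for all $t\ge 1$. In the case $0<p<q$ assume in addition that there is $t_0\ge1$ such that for all $t>t_0$ the function $\psi^p$ is convex and $$\frac{t\,|\psi'(t)|}{\psi(t)}\ \ge\ K_0\ >\ \beta:=d\Big(\frac1p-\frac1q\Big)$$ for some constant $K_0$, where $\psi'(t):=\psi'(t+)$ is the right derivative. Then for every $r\in[1,\infty]$, $$e_n\big(\mathcal{F}^{\psi}_{q,r}\big)_{\mathcal{S}^p}\asymp \psi\big(n^{1/d}\big)\, n^{\frac1p-\frac1q},\qquad n\in\mathbb{N},$$ i.e. there exist constants $C_1,C_2>0$ independent of $n$ such that $C_1\psi(n^{1/d})n^{1/p-1/q}\le e_n(\mathcal{F}^{\psi}_{q,r})_{\mathcal{S}^p}\le C_2\psi(n^{1/d})n^{1/p-1/q}$ for all $n\in\mathbb{N}$.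
   Context: $\mathbb{T}^d=[0,2\pi)^d$, and $L(\mathbb{T}^d)$ is the set of functions $2\pi$-periodic in each variable and Lebesgue integrable on $\mathbb{T}^d$ (functions equal a.e. identified). For $f\in L(\mathbb{T}^d)$ and $\mathbf{k}\in\mathbb{Z}^d$, $\widehat f(\mathbf{k})=(2\pi)^{-d}\int_{\mathbb{T}^d}f(\mathbf{x})e^{-i(\mathbf{k},\mathbf{x})}\,d\mathbf{x}$, where $(\mathbf{k},\mathbf{x})=k_1x_1+\dots+k_dx_d$. For $0<p<\infty$, $\mathcal{S}^p$ is the space of $f\in L(\mathbb{T}^d)$ with finite (quasi-)norm $\|f\|_{\mathcal{S}^p}=\big(\sum_{\mathbf{k}\in\mathbb{Z}^d}|\widehat f(\mathbf{k})|^p\big)^{1/p}$. For $0<r\le\infty$ and $\mathbf{k}\in\mathbb{Z}^d$, $|\mathbf{k}|_r=(\sum_{j=1}^d|k_j|^r)^{1/r}$ if $r<\infty$ and $|\mathbf{k}|_\infty=\max_j|k_j|$. The class $\mathcal{F}^{\psi}_{q,r}=\{f\in L(\mathbb{T}^d):\ \big(\sum_{\mathbf{k}\in\mathbb{Z}^d}|\widehat f(\mathbf{k})/\psi(|\mathbf{k}|_r)|^q\big)^{1/q}\le 1\}$. For $n\in\mathbb{N}$ and a set $\mathfrak{N}\subset\mathcal{S}^p$, the best $n$-term trigonometric approximation is $e_n(\mathfrak{N})_{\mathcal{S}^p}=\sup_{f\in\mathfrak{N}}\inf_{\gamma_n}\inf_{c_{\mathbf{k}}\in\mathbb{C}}\big\|f-\sum_{\mathbf{k}\in\gamma_n}c_{\mathbf{k}}e^{i(\mathbf{k},\cdot)}\big\|_{\mathcal{S}^p}$,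 where $\gamma_n$ ranges over all sets of $n$ distinct vectors of $\mathbb{Z}^d$. *)

theory Defs
  imports "HOL-Analysis.Analysis"
begin

text \<open>Frequencies k in Z^d are modelled as int^'d, points of T^d as real^'d,
  where the dimension d = CARD('d) is a type parameter (d >= 1 automatically).\<close>

definition ipr :: "int^'d \<Rightarrow> real^'d \<Rightarrow> real" where
  "ipr k x = (\<Sum>j\<in>UNIV. of_int (k$j) * x$j)"

definition torus :: "(real^'d) set" where
  "torus = cbox 0 (\<chi> j. 2*pi)"

definition Lper :: "(real^'d \<Rightarrow> complex) \<Rightarrow> bool" where
  "Lper f \<longleftrightarrow> (\<forall>x j. f (x + axis j (2*pi)) = f x) \<and> f absolutely_integrable_on torus"

definition fourier_coeff :: "(real^'d \<Rightarrow> complex) \<Rightarrow> int^'d \<Rightarrow> complex" where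
  "fourier_coeff f k = complex_of_real (1 / (2*pi) ^ CARD('d)) *
      integral torus (\<lambda>x. f x * exp (- \<i> * complex_of_real (ipr k x)))"

definition knorm :: "ereal \<Rightarrow> int^'d \<Rightarrow> real" where
  "knorm r k = (if r = \<infinity> then Max ((\<lambda>j. real_of_int \<bar>k$j\<bar>) ` UNIV)
       else (\<Sum>j\<in>UNIV. real_of_int \<bar>k$j\<bar> powr real_of_ereal r) powr (1 / real_of_ereal r))"

definition psiext :: "(real \<Rightarrow> real) \<Rightarrow> real \<Rightarrow> real" where
  "psiext \<psi> t = (if t = 0 then \<psi> 1 else \<psi> t)"

definition Sp_norm :: "real \<Rightarrow> (real^'d \<Rightarrow> complex) \<Rightarrow> ereal" where
  "Sp_norm p f = (if (\<lambda>k. norm (fourier_coeff f k) powr p) summable_on UNIV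
      then ereal ((\<Sum>\<^sub>\<infinity>k. norm (fourier_coeff f k) powr p) powr (1/p)) else \<infinity>)"

definition Fclass :: "(real \<Rightarrow> real) \<Rightarrow> real \<Rightarrow> ereal \<Rightarrow> (real^'d \<Rightarrow> complex) set" where
  "Fclass \<psi> q r = {f. Lper f \<and>
      (\<lambda>k. (norm (fourier_coeff f k) / psiext \<psi> (knorm r k)) powr q) summable_on UNIV \<and>
      (\<Sum>\<^sub>\<infinity>k. (norm (fourier_coeff f k) / psiext \<psi> (knorm r k)) powr q) powr (1/q) \<le> 1}"

definition trig_poly :: "(int^'d) set \<Rightarrow> (int^'d \<Rightarrow> complex) \<Rightarrow> real^'d \<Rightarrow> complex" where
  "trig_poly \<gamma> c x = (\<Sum>k\<in>\<gamma>. c k * exp (\<i> * complex_of_real (ipr k x)))"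

definition best_nterm :: "real \<Rightarrow> (real^'d \<Rightarrow> complex) set \<Rightarrow> nat \<Rightarrow> ereal" where
  "best_nterm p N n = (SUP f\<in>N. INF \<gamma>\<in>{\<gamma>. finite \<gamma> \<and> card \<gamma> = n}. INF c\<in>UNIV.
       Sp_norm p (\<lambda>x. f x - trig_poly \<gamma> c x))"

end

theory Submission
  imports Defs
begin

(* Lower bound: the trigonometric polynomial with equal coefficients on a cube of about 2n
   frequencies, scaled into the class, keeps half of its coefficients after any n of them are
   removed; this costs psi(n^(1/d)) n^(1/p - 1/q) in S^p.
   Upper bound: keep the Fourier coefficients on a cube of at most n frequencies (for q <= p, half
   of them, together with the n/2 largest normalised coefficients |f^(k)| / psi(|k|_r)). For q <= p
   every remaining normalised coefficient is at most (n/2)^(-1/q), so the l^p tail is controlled by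
   the l^q norm. For p < q, Young's inequality splits |f^(k)|^p into the q-th power of the
   normalised coefficient and psi(|k|)^s with s = pq/(q-p); the derivative condition K0 > beta
   makes psi^s decay faster than t^(-d) along dyadic scales (beta s = d), so the sum of psi(|k|)^s
   outside a cube of side M is O(M^d psi(M)^s). The Delta_2 condition makes psi comparable at
   comparable arguments. *)


section \<open>Characters on the torus\<close>

lemma exp_int_has_integral:
  fixes a :: int
  shows "((\<lambda>t. exp (\<i> * (of_int a * of_real t))) has_integral
           (if a = 0 then complex_of_real (2*pi) else 0)) {0..2*pi}"
proof (cases "a = 0")
  case True
  then show ?thesis
    using has_integral_const_real[of "1::complex" 0 "2*pi"] by (simp add: scaleR_conv_of_real)
next
  case False
  define F where "F = (\<lambda>z::complex. exp (\<i> * of_int a * z) / (\<i> * of_int a))"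
  have F': "((\<lambda>t. F (of_real t)) has_vector_derivative exp (\<i> * (of_int a * of_real t)))
              (at t within {0..2*pi})" for t
  proof -
    have "(F has_field_derivative exp (\<i> * of_int a * of_real t)) (at (of_real t))"
      unfolding F_def using False by (auto intro!: derivative_eq_intros simp: field_simps)
    from has_vector_derivative_real_field[OF this] show ?thesis
      by (simp add: mult.assoc)
  qed
  have "((\<lambda>t. exp (\<i> * (of_int a * of_real t))) has_integral (F (of_real (2*pi)) - F 0)) {0..2*pi}"
    using fundamental_theorem_of_calculus[OF _ F'] by simp
  moreover have "exp (\<i> * of_int a * of_real (2*pi)) = 1"
    using exp_integer_2pi[of "of_int a"] by (simp add: mult_ac)
  ultimately show ?thesis
    using False by (simp add: F_def)
qed

lemma exp_int_interval_lborel: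
  fixes a :: int
  defines "g \<equiv> \<lambda>t. indicator {0..2*pi} t *\<^sub>R exp (\<i> * (of_int a * complex_of_real t))"
  shows "integrable lborel g"
    and "integral\<^sup>L lborel g = (if a = 0 then complex_of_real (2*pi) else 0)"
proof -
  have "set_integrable lborel {0..2*pi} (\<lambda>t. exp (\<i> * (of_int a * complex_of_real t)))"
    by (rule borel_integrable_atLeastAtMost') (auto intro!: continuous_intros)
  then show int: "integrable lborel g"
    by (simp add: set_integrable_def g_def)
  have "g = (\<lambda>t. if t \<in> {0..2*pi} then exp (\<i> * (of_int a * complex_of_real t)) else 0)"
    by (auto simp: g_def)
  then have "((\<lambda>t. exp (\<i> * (of_int a * complex_of_real t))) has_integral integral\<^sup>L lborel g) {0..2*pi}"
    using has_integral_integral_lborel[OF int] by (simp only: has_integral_restrict_UNIV)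
  then show "integral\<^sup>L lborel g = (if a = 0 then complex_of_real (2*pi) else 0)"
    using exp_int_has_integral has_integral_unique by blast
qed

lemma Basis_vec_real: "(Basis :: (real^'d) set) = range (\<lambda>i. axis i 1)"
  by (auto simp: Basis_vec_def)

lemma prod_Basis_vec: "(\<Prod>b\<in>(Basis :: (real^'d) set). f b) = (\<Prod>i\<in>UNIV. f (axis i 1))"
  unfolding Basis_vec_real by (subst prod.reindex) (auto simp: inj_on_def axis_eq_axis)

text \<open>The torus integral factorises into one-dimensional integrals, computed via the product
  of the Lebesgue measures on the coordinates.\<close>
lemma integral_exp_ipr_torus:
  fixes m :: "int^'d"
  shows "integral torus (\<lambda>x. exp (\<i> * complex_of_real (ipr m x)))
           = (if m = 0 then complex_of_real ((2*pi) ^ CARD('d)) else 0)"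
proof -
  define H where "H = (\<lambda>(b::real^'d) t. indicator {0..2*pi} t *\<^sub>R
                                          exp (\<i> * (of_int (m $ axis_index b) * complex_of_real t)))"
  define G where "G = (\<lambda>x::real^'d. \<Prod>b\<in>Basis. H b (x \<bullet> b))"
  interpret P: product_sigma_finite "\<lambda>b::real^'d. lborel" by standard
  have T: "(\<lambda>f. \<Sum>b\<in>(Basis::(real^'d) set). f b *\<^sub>R b) \<in> measurable (\<Pi>\<^sub>M b\<in>Basis. lborel) borel"
    by measurable
  have GT: "G (\<Sum>b\<in>Basis. f b *\<^sub>R b) = (\<Prod>b\<in>Basis. H b (f b))" for f
    unfolding G_def by (intro prod.cong refl) (simp add: inner_sum_left inner_Basis if_distrib cong: if_cong)
  have "H b \<in> borel_measurable lborel" for b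
    using exp_int_interval_lborel(1) unfolding H_def by (rule borel_measurable_integrable)
  then have G_meas: "G \<in> borel_measurable borel"
    unfolding G_def by measurable
  have int_prod: "integrable (\<Pi>\<^sub>M b\<in>Basis. lborel) (\<lambda>f. \<Prod>b\<in>(Basis::(real^'d) set). H b (f b))"
    by (rule P.product_integrable_prod) (auto simp: H_def exp_int_interval_lborel(1))
  have int_G: "integrable lborel G"
    by (subst lborel_eq, subst integrable_distr_eq[OF T G_meas]) (simp add: GT int_prod)
  have integral_G: "integral\<^sup>L lborel G = (\<Prod>b\<in>(Basis::(real^'d) set). integral\<^sup>L lborel (H b))"
    by (subst lborel_eq, subst integral_distr[OF T G_meas], simp only: GT,
        rule P.product_integral_prod) (auto simp: H_def exp_int_interval_lborel(1))
  have G_eq: "G = (\<lambda>x. if x \<in> torus then exp (\<i> * complex_of_real (ipr m x)) else 0)"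
  proof
    fix x :: "real^'d"
    have "G x = (\<Prod>i\<in>UNIV. (indicator {0..2*pi} (x$i) :: real)) *\<^sub>R
                  (\<Prod>i\<in>UNIV. exp (\<i> * (of_int (m $ i) * complex_of_real (x$i))))"
      unfolding G_def H_def prod_Basis_vec
      by (simp add: cart_eq_inner_axis prod.distrib scaleR_conv_of_real)
    also have "(\<Prod>i\<in>UNIV. exp (\<i> * (of_int (m $ i) * complex_of_real (x$i))))
                 = exp (\<i> * complex_of_real (ipr m x))"
      by (simp add: ipr_def exp_sum[symmetric] sum_distrib_left)
    also have "(\<Prod>i\<in>UNIV. (indicator {0..2*pi} (x$i) :: real)) = indicator torus x"
      by (auto simp: indicator_def torus_def mem_box_cart prod_zero_iff)
    finally show "G x = (if x \<in> torus then exp (\<i> * complex_of_real (ipr m x)) else 0)"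
      by (simp add: indicator_def)
  qed
  have "((\<lambda>x. exp (\<i> * complex_of_real (ipr m x))) has_integral integral\<^sup>L lborel G) torus"
    using has_integral_integral_lborel[OF int_G] by (simp add: G_eq has_integral_restrict_UNIV)
  then have "integral torus (\<lambda>x. exp (\<i> * complex_of_real (ipr m x)))
               = (\<Prod>i\<in>UNIV. if m $ i = 0 then complex_of_real (2*pi) else 0)"
    using integral_G by (simp add: integral_unique prod_Basis_vec H_def exp_int_interval_lborel(2))
  also have "\<dots> = (if m = 0 then complex_of_real ((2*pi) ^ CARD('d)) else 0)"
    by (auto simp: prod_zero_iff vec_eq_iff)
  finally show ?thesis .
qed

lemma ipr_diff: "ipr (l - k) x = ipr l x - ipr k x"
  unfolding ipr_def by (simp add: sum_subtractf left_diff_distrib)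

lemma ipr_add_axis:
  fixes k :: "int^'d"
  shows "ipr k (x + axis j (2*pi)) = ipr k x + of_int (k $ j) * (2*pi)"
proof -
  have "(\<Sum>i\<in>UNIV. of_int (k$i) * (axis j (2*pi) :: real^'d) $ i) = of_int (k $ j) * (2*pi)"
    by (simp add: axis_def if_distrib cong: if_cong)
  then show ?thesis
    unfolding ipr_def by (simp add: distrib_left sum.distrib)
qed

lemma continuous_on_ipr: "continuous_on S (ipr k)"
  unfolding ipr_def[abs_def] by (auto intro!: continuous_intros)

lemma continuous_on_exp_ipr: "continuous_on S (\<lambda>x. exp (c * complex_of_real (ipr k x)))"
  by (auto intro!: continuous_intros continuous_on_ipr)

lemma continuous_on_trig_poly: "continuous_on S (trig_poly \<gamma> c)"
  unfolding trig_poly_def[abs_def] by (auto intro!: continuous_intros continuous_on_ipr)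

lemma integral_trig_poly_times_exp:
  fixes \<gamma> :: "(int^'d) set"
  assumes "finite \<gamma>"
  shows "integral torus (\<lambda>x. trig_poly \<gamma> c x * exp (- \<i> * complex_of_real (ipr k x)))
           = (if k \<in> \<gamma> then c k * complex_of_real ((2*pi) ^ CARD('d)) else 0)"
proof -
  have eq: "trig_poly \<gamma> c x * exp (- \<i> * complex_of_real (ipr k x))
              = (\<Sum>l\<in>\<gamma>. c l * exp (\<i> * complex_of_real (ipr (l - k) x)))" for x
    unfolding trig_poly_def sum_distrib_right ipr_diff
    by (intro sum.cong refl) (simp add: mult.assoc exp_add[symmetric] algebra_simps)
  have "(\<lambda>x. exp (\<i> * complex_of_real (ipr (l - k) x))) integrable_on torus" for l
    unfolding torus_def by (rule integrable_continuous) (rule continuous_on_exp_ipr)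
  then have "integral torus (\<lambda>x. trig_poly \<gamma> c x * exp (- \<i> * complex_of_real (ipr k x)))
       = (\<Sum>l\<in>\<gamma>. c l * integral torus (\<lambda>x. exp (\<i> * complex_of_real (ipr (l - k) x))))"
    unfolding eq by (subst integral_sum) (auto intro!: assms integrable_on_mult_right)
  also have "\<dots> = (\<Sum>l\<in>\<gamma>. if l = k then c l * complex_of_real ((2*pi) ^ CARD('d)) else 0)"
    by (intro sum.cong refl) (simp add: integral_exp_ipr_torus)
  finally show ?thesis
    using assms by (simp add: sum.delta')
qed

lemma fourier_coeff_trig_poly:
  assumes "finite \<gamma>"
  shows "fourier_coeff (trig_poly \<gamma> c :: real^'d \<Rightarrow> complex) k = (if k \<in> \<gamma> then c k else 0)"
  unfolding fourier_coeff_def integral_trig_poly_times_exp[OF assms] by auto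

lemma fourier_coeff_minus_trig_poly:
  fixes f :: "real^'d \<Rightarrow> complex"
  assumes f: "f absolutely_integrable_on torus" and "finite \<gamma>"
  shows "fourier_coeff (\<lambda>x. f x - trig_poly \<gamma> c x) k
           = fourier_coeff f k - (if k \<in> \<gamma> then c k else 0)"
proof -
  have "(\<lambda>x. exp (- \<i> * complex_of_real (ipr k x)) * f x) absolutely_integrable_on torus"
  proof (rule absolutely_integrable_bounded_measurable_product[OF bilinear_times _ _ _ f])
    show "(\<lambda>x. exp (- \<i> * complex_of_real (ipr k x))) \<in> borel_measurable (lebesgue_on torus)"
      by (rule continuous_imp_measurable_on_sets_lebesgue[OF continuous_on_exp_ipr])
         (simp add: torus_def)
    show "bounded ((\<lambda>x. exp (- \<i> * complex_of_real (ipr k x))) ` torus)"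
      by (rule compact_imp_bounded, rule compact_continuous_image[OF continuous_on_exp_ipr])
         (simp add: torus_def)
  qed (simp add: torus_def)
  then have fi: "(\<lambda>x. f x * exp (- \<i> * complex_of_real (ipr k x))) integrable_on torus"
    by (simp add: mult.commute set_lebesgue_integral_eq_integral(1))
  have ti: "(\<lambda>x. trig_poly \<gamma> c x * exp (- \<i> * complex_of_real (ipr k x))) integrable_on torus"
    unfolding torus_def
    by (rule integrable_continuous) (auto intro!: continuous_intros continuous_on_trig_poly continuous_on_ipr)
  have "integral torus (\<lambda>x. (f x - trig_poly \<gamma> c x) * exp (- \<i> * complex_of_real (ipr k x)))
      = integral torus (\<lambda>x. f x * exp (- \<i> * complex_of_real (ipr k x)))
        - integral torus (\<lambda>x. trig_poly \<gamma> c x * exp (- \<i> * complex_of_real (ipr k x)))"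
    using integral_diff[OF fi ti] by (simp add: left_diff_distrib)
  then show ?thesis
    unfolding fourier_coeff_def integral_trig_poly_times_exp[OF assms(2)]
    by (auto simp: right_diff_distrib)
qed

lemma Lper_trig_poly:
  assumes "finite \<gamma>"
  shows "Lper (trig_poly \<gamma> c :: real^'d \<Rightarrow> complex)"
proof -
  have "exp (\<i> * complex_of_real (ipr k (x + axis j (2*pi)))) = exp (\<i> * complex_of_real (ipr k x))"
    for k and x :: "real^'d" and j
  proof -
    have "exp (\<i> * complex_of_real (ipr k (x + axis j (2*pi))))
            = exp (\<i> * complex_of_real (ipr k x)) * exp ((2 * of_int (k $ j) * pi) * \<i>)"
      unfolding ipr_add_axis by (simp add: exp_add[symmetric] algebra_simps)
    then show ?thesis
      using exp_integer_2pi[of "of_int (k $ j)"] by simp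
  qed
  moreover have "trig_poly \<gamma> c absolutely_integrable_on torus"
    unfolding torus_def by (rule absolutely_integrable_continuous) (rule continuous_on_trig_poly)
  ultimately show ?thesis
    unfolding Lper_def trig_poly_def by simp
qed

section \<open>Elementary inequalities\<close>

lemma root_powr_power: "0 < x \<Longrightarrow> 0 < d \<Longrightarrow> (x powr (1 / real d)) ^ d = (x::real)"
  by (simp add: powr_realpow[symmetric] powr_powr)

lemma powr_le_powr_mult_bound:
  fixes b c p q :: real
  assumes b: "0 \<le> b" and bc: "b powr q \<le> c" and q: "0 < q" "q \<le> p"
  shows "b powr p \<le> b powr q * c powr ((p - q) / q)"
proof -
  have "b powr (p - q) = (b powr q) powr ((p - q) / q)"
    using q by (simp add: powr_powr)
  also have "\<dots> \<le> c powr ((p - q) / q)"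
    using bc q by (intro powr_mono2) auto
  finally have "b powr q * b powr (p - q) \<le> b powr q * c powr ((p - q) / q)"
    by (rule mult_left_mono) simp
  then show ?thesis
    using powr_add[of b q "p - q"] by simp
qed

lemma min_powr_mult_le:
  fixes x y c e :: real
  assumes x: "0 < x" "x \<le> y" and y: "y \<le> c * x"
  shows "min 1 (c powr e) * x powr e \<le> y powr e"
proof (cases "0 \<le> e")
  case True
  have "min 1 (c powr e) * x powr e \<le> 1 * x powr e"
    by (intro mult_right_mono) auto
  also have "\<dots> \<le> y powr e"
    using True x by (simp add: powr_mono2)
  finally show ?thesis .
next
  case False
  have "0 < c * x"
    using x y by linarith
  then have c: "0 < c"
    using x by (simp add: zero_less_mult_iff)
  have "min 1 (c powr e) * x powr e \<le> c powr e * x powr e"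
    by (intro mult_right_mono) auto
  also have "\<dots> = (c * x) powr e"
    using c x by (simp add: powr_mult)
  also have "\<dots> \<le> y powr e"
    using False x y by (intro powr_mono2') auto
  finally show ?thesis .
qed

lemma young_powr_split:
  fixes x y \<Theta> p q :: real
  assumes x: "0 \<le> x" and y: "0 \<le> y" and \<Theta>: "0 < \<Theta>" and p: "0 < p" and pq: "p < q"
  shows "(x * y) powr p \<le> \<Theta> powr ((q - p) / q) * x powr q + \<Theta> powr (- p / q) * y powr (p * q / (q - p))"
proof (cases "x = 0 \<or> y = 0")
  case True
  then show ?thesis
    by auto
next
  case False
  then have x0: "0 < x" and y0: "0 < y"
    using x y by auto
  define s where "s = p * q / (q - p)"
  have q: "0 < q"
    using p pq by simp
  have s_exp: "s * ((q - p) / q) = p" "s * p / q + p = s"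
    using pq q by (simp_all add: s_def field_simps)
  have xy: "(x * y) powr p = x powr p * y powr p"
    using x0 y0 by (simp add: powr_mult)
  have nonneg: "0 \<le> \<Theta> powr ((q - p) / q) * x powr q" "0 \<le> \<Theta> powr (- p / q) * y powr s"
    by simp_all
  show ?thesis
  proof (cases "y powr s \<le> \<Theta> * x powr q")
    case True
    have "y powr p = (y powr s) powr ((q - p) / q)"
      using powr_powr[of y s "(q - p) / q"] s_exp by simp
    also have "\<dots> \<le> (\<Theta> * x powr q) powr ((q - p) / q)"
      using True pq q by (intro powr_mono2) auto
    also have "\<dots> = \<Theta> powr ((q - p) / q) * x powr (q - p)"
      using \<Theta> x0 q by (simp add: powr_mult powr_powr)
    finally have "(x * y) powr p \<le> x powr p * (\<Theta> powr ((q - p) / q) * x powr (q - p))"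
      unfolding xy by (intro mult_left_mono) auto
    also have "\<dots> = \<Theta> powr ((q - p) / q) * x powr q"
      by (simp add: powr_add[symmetric] mult_ac)
    finally show ?thesis
      using nonneg unfolding s_def by linarith
  next
    case False
    have "x powr p = (x powr q) powr (p / q)"
      using q by (simp add: powr_powr)
    also have "\<dots> \<le> (y powr s / \<Theta>) powr (p / q)"
      using False \<Theta> p q by (intro powr_mono2) (auto simp: field_simps)
    also have "\<dots> = \<Theta> powr (- p / q) * y powr (s * p / q)"
      using \<Theta> y0 by (simp add: powr_divide powr_powr powr_minus_divide)
    finally have "(x * y) powr p \<le> (\<Theta> powr (- p / q) * y powr (s * p / q)) * y powr p"
      unfolding xy by (intro mult_right_mono) auto
    also have "\<dots> = \<Theta> powr (- p / q) * y powr s"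
      by (simp add: mult.assoc powr_add[symmetric] s_exp)
    finally show ?thesis
      using nonneg unfolding s_def by linarith
  qed
qed

lemma le_root_mult_of_powr_le:
  fixes a b K p :: real
  assumes p: "0 < p" and K: "0 < K" and ab: "0 < a" "0 < b" and le: "a powr p \<le> K * b powr p"
  shows "a \<le> K powr (1/p) * b"
proof -
  have "a = (a powr p) powr (1/p)"
    using ab p by (simp add: powr_powr)
  also have "\<dots> \<le> (K * b powr p) powr (1/p)"
    using le p ab by (intro powr_mono2) auto
  also have "\<dots> = K powr (1/p) * b"
    using K ab p by (simp add: powr_mult powr_powr)
  finally show ?thesis .
qed

lemma sum_power_le_geometric:
  fixes x :: real
  assumes J: "finite J" and x: "0 \<le> x" "x < 1"
  shows "(\<Sum>j\<in>J. x ^ j) \<le> 1 / (1 - x)"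
proof -
  obtain N where "J \<subseteq> {..<N}"
    using finite_nat_bounded[OF J] by blast
  then have "(\<Sum>j\<in>J. x ^ j) \<le> (\<Sum>j<N. x ^ j)"
    using x by (intro sum_mono2) auto
  also have "\<dots> \<le> 1 / (1 - x)"
    using x by (simp add: sum_gp_strict divide_right_mono)
  finally show ?thesis .
qed

lemma nonneg_summable_on_infsum_le:
  fixes g :: "'a \<Rightarrow> real"
  assumes "\<And>x. x \<in> A \<Longrightarrow> 0 \<le> g x" "\<And>F. finite F \<Longrightarrow> F \<subseteq> A \<Longrightarrow> sum g F \<le> B"
  shows "g summable_on A" "infsum g A \<le> B"
proof -
  show s: "g summable_on A"
    by (rule nonneg_bdd_above_summable_on) (use assms in \<open>auto simp: bdd_above_def\<close>)
  show "infsum g A \<le> B"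
    by (rule infsum_le_finite_sums[OF s]) (use assms in auto)
qed

lemma finite_card_greater_inverse:
  fixes g :: "'a \<Rightarrow> real"
  assumes sums: "\<And>F. finite F \<Longrightarrow> sum g F \<le> 1"
  shows "finite {k. 1 / real (Suc m) < g k}" "card {k. 1 / real (Suc m) < g k} \<le> m"
proof -
  define G where "G = {k. 1 / real (Suc m) < g k}"
  have small: "card F \<le> m" if "F \<subseteq> G" "finite F" for F
  proof (cases "F = {}")
    case False
    have "real (card F) * (1 / real (Suc m)) < sum g F"
      using that False sum_strict_mono[of F "\<lambda>_. 1 / real (Suc m)" g] by (auto simp: G_def)
    then have "real (card F) < real (Suc m) * sum g F"
      by (simp add: field_simps)
    also have "\<dots> \<le> real (Suc m)"
      using sums[OF that(2)] by (simp add: mult_left_le)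
    finally show ?thesis by simp
  qed simp
  show "finite {k. 1 / real (Suc m) < g k}"
  proof (rule ccontr)
    assume "infinite {k. 1 / real (Suc m) < g k}"
    then obtain F where "finite F" "card F = Suc m" "F \<subseteq> G"
      using infinite_arbitrarily_large unfolding G_def by blast
    then show False
      using small[of F] by simp
  qed
  then show "card {k. 1 / real (Suc m) < g k} \<le> m"
    using small[of G] by (simp add: G_def)
qed

lemma dyadic_floor:
  fixes u x :: real
  assumes "0 < u" "u \<le> x"
  defines "j \<equiv> nat \<lfloor>log 2 (x / u)\<rfloor>"
  shows "2 ^ j * u \<le> x" "x < 2 ^ (j + 1) * u"
proof -
  define z where "z = \<lfloor>log 2 (x / u)\<rfloor>"
  have q1: "1 \<le> x / u"
    using assms by simp
  then have z: "0 \<le> z" "j = nat z"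
    by (simp_all add: z_def j_def)
  have "real_of_int z = real j"
    using z by simp
  then have "2 powr z = 2 ^ j" "2 powr (z + 1) = 2 ^ (j + 1)"
    by (simp_all add: powr_add powr_realpow)
  moreover have "2 powr z \<le> x / u" "x / u < 2 powr (z + 1)"
    using floor_log_eq_powr_iff[of "x / u" 2 z] q1 by (simp_all add: z_def)
  ultimately show "2 ^ j * u \<le> x" "x < 2 ^ (j + 1) * u"
    using assms(1) by (simp_all add: pos_le_divide_eq pos_divide_less_eq)
qed

section \<open>Frequency norms and cubes\<close>

definition maxnorm :: "int^'d \<Rightarrow> real" where
  "maxnorm k = Max ((\<lambda>j. real_of_int \<bar>k$j\<bar>) ` UNIV)"

lemma abs_le_maxnorm: "real_of_int \<bar>k$j\<bar> \<le> maxnorm k"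
  unfolding maxnorm_def by (rule Max_ge) auto

lemma maxnorm_attained: "\<exists>j. maxnorm k = real_of_int \<bar>k$j\<bar>"
proof -
  have "maxnorm k \<in> (\<lambda>j. real_of_int \<bar>k$j\<bar>) ` UNIV"
    unfolding maxnorm_def by (rule Max_in) auto
  then show ?thesis by auto
qed

lemma maxnorm_nonneg: "0 \<le> maxnorm k"
  by (rule order_trans[OF _ abs_le_maxnorm]) simp

lemma maxnorm_ge_1:
  assumes "k \<noteq> 0"
  shows "1 \<le> maxnorm k"
proof -
  obtain j where "k $ j \<noteq> 0"
    using assms by (auto simp: vec_eq_iff)
  then show ?thesis
    using abs_le_maxnorm[of k j] by linarith
qed

lemma maxnorm_le_knorm:
  assumes "1 \<le> r"
  shows "maxnorm k \<le> knorm r k"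
proof (cases "r = \<infinity>")
  case True
  then show ?thesis by (simp add: knorm_def maxnorm_def)
next
  case False
  define \<rho> where "\<rho> = real_of_ereal r"
  have \<rho>: "1 \<le> \<rho>" "r = ereal \<rho>"
    using assms False by (cases r; simp add: \<rho>_def)+
  obtain j where j: "maxnorm k = real_of_int \<bar>k$j\<bar>"
    using maxnorm_attained by blast
  have "maxnorm k powr \<rho> \<le> (\<Sum>j\<in>UNIV. real_of_int \<bar>k$j\<bar> powr \<rho>)"
    unfolding j by (rule member_le_sum) auto
  then have "(maxnorm k powr \<rho>) powr (1/\<rho>) \<le> (\<Sum>j\<in>UNIV. real_of_int \<bar>k$j\<bar> powr \<rho>) powr (1/\<rho>)"
    using \<rho> by (intro powr_mono2) auto
  then show ?thesis
    using \<rho> maxnorm_nonneg[of k] by (simp add: knorm_def powr_powr)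
qed

lemma knorm_le_maxnorm:
  fixes k :: "int^'d"
  assumes "1 \<le> r"
  shows "knorm r k \<le> real CARD('d) * maxnorm k"
proof -
  have d: "1 \<le> real CARD('d)"
    by (simp add: Suc_le_eq)
  show ?thesis
  proof (cases "r = \<infinity>")
    case True
    then show ?thesis
      using mult_right_mono[OF d maxnorm_nonneg[of k]] by (simp add: knorm_def maxnorm_def)
  next
    case False
    define \<rho> where "\<rho> = real_of_ereal r"
    have \<rho>: "1 \<le> \<rho>" "r = ereal \<rho>"
      using assms False by (cases r; simp add: \<rho>_def)+
    have "(\<Sum>j\<in>UNIV. real_of_int \<bar>k$j\<bar> powr \<rho>) \<le> (\<Sum>j\<in>(UNIV::'d set). maxnorm k powr \<rho>)"
      by (intro sum_mono powr_mono2) (use \<rho> abs_le_maxnorm in auto)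
    then have "knorm r k \<le> (real CARD('d) * maxnorm k powr \<rho>) powr (1/\<rho>)"
      using \<rho> by (auto simp: knorm_def intro!: powr_mono2 sum_nonneg)
    also have "\<dots> = real CARD('d) powr (1/\<rho>) * maxnorm k"
      using \<rho> maxnorm_nonneg[of k] by (simp add: powr_mult powr_powr)
    also have "\<dots> \<le> real CARD('d) * maxnorm k"
      using powr_mono[of "1/\<rho>" 1 "real CARD('d)"] \<rho> d maxnorm_nonneg[of k]
      by (auto intro!: mult_right_mono)
    finally show ?thesis .
  qed
qed

lemma knorm_zero:
  assumes "1 \<le> r"
  shows "knorm r (0::int^'d) = 0"
proof -
  have "maxnorm (0::int^'d) = 0"
    by (simp add: maxnorm_def)
  then show ?thesis
    using knorm_le_maxnorm[OF assms, where k="0::int^'d"] maxnorm_le_knorm[OF assms, where k="0::int^'d"]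
    by simp
qed

definition cube :: "nat \<Rightarrow> (int^'d) set" where
  "cube M = {k. \<forall>j. \<bar>k$j\<bar> \<le> int M}"

lemma mem_cube: "k \<in> cube M \<longleftrightarrow> (\<forall>j. k$j \<in> {-int M..int M})"
proof -
  have "\<bar>x\<bar> \<le> int M \<longleftrightarrow> x \<in> {-int M..int M}" for x :: int
    by auto
  then show ?thesis
    by (simp add: cube_def)
qed

lemma mem_cube_iff_maxnorm: "k \<in> cube M \<longleftrightarrow> maxnorm k \<le> real M"
proof
  assume "k \<in> cube M"
  then show "maxnorm k \<le> real M"
    using maxnorm_attained[of k] by (auto simp: cube_def) (metis of_int_abs of_int_le_iff of_int_of_nat_eq)
next
  assume "maxnorm k \<le> real M"
  then show "k \<in> cube M"
    using abs_le_maxnorm[of k] unfolding cube_def by (smt (verit) mem_Collect_eq of_int_le_iff of_int_of_nat_eq)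
qed

lemma maxnorm_outside_cube:
  assumes "k \<notin> cube M"
  shows "real M + 1 \<le> maxnorm k"
proof -
  obtain j where "\<not> \<bar>k$j\<bar> \<le> int M"
    using assms unfolding cube_def by auto
  then show ?thesis
    using abs_le_maxnorm[of k j] by linarith
qed

lemma bij_betw_cube: "bij_betw vec_nth (cube M :: (int^'d) set) (Pi\<^sub>E UNIV (\<lambda>_. {-int M..int M}))"
  by (rule bij_betwI[of _ _ _ vec_lambda]) (auto simp: mem_cube PiE_iff Pi_iff)

lemma finite_cube: "finite (cube M)"
  using bij_betw_finite[OF bij_betw_cube] by (simp add: finite_PiE)

lemma card_cube: "card (cube M :: (int^'d) set) = (2*M+1) ^ CARD('d)"
  using bij_betw_same_card[OF bij_betw_cube] by (simp add: card_PiE nat_add_distrib nat_mult_distrib)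

lemma card_le_of_maxnorm_le:
  fixes K :: "(int^'d) set"
  assumes "\<And>k. k \<in> K \<Longrightarrow> maxnorm k \<le> real N"
  shows "card K \<le> (2*N+1) ^ CARD('d)"
proof -
  have "K \<subseteq> cube N"
    using assms by (auto simp: mem_cube_iff_maxnorm)
  then show ?thesis
    using card_mono[OF finite_cube] by (simp add: card_cube)
qed

lemma card_dyadic_shell:
  fixes K :: "(int^'d) set"
  assumes K: "\<And>k. k \<in> K \<Longrightarrow> maxnorm k < 2 ^ (j + 1) * real u" and u: "1 \<le> u"
  shows "real (card K) \<le> 5 ^ CARD('d) * real u ^ CARD('d) * (2 ^ CARD('d)) ^ j"
proof -
  have "card K \<le> (2 * (2 ^ (j + 1) * u) + 1) ^ CARD('d)"
    using K by (intro card_le_of_maxnorm_le) (auto intro: less_imp_le)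
  also have "\<dots> \<le> (5 * 2 ^ j * u) ^ CARD('d)"
    using u by (intro power_mono) auto
  finally have "real (card K) \<le> real ((5 * 2 ^ j * u) ^ CARD('d))"
    by (simp only: of_nat_le_iff)
  moreover have "((2::real) ^ j) ^ CARD('d) = (2 ^ CARD('d)) ^ j"
    by (simp add: power_mult[symmetric] mult.commute)
  ultimately show ?thesis
    by (simp add: power_mult_distrib mult_ac)
qed

lemma one_le_CARD_mult: "1 \<le> M \<Longrightarrow> 1 \<le> real CARD('d::finite) * real M"
  using mult_mono[of 1 "real CARD('d)" 1 "real M"] by (simp add: Suc_le_eq)

lemma exists_cube_card_ge:
  assumes n: "1 \<le> n"
  obtains M where "1 \<le> M" "2 * real n \<le> real (card (cube M :: (int^'d) set))"
    "real (card (cube M :: (int^'d) set)) \<le> 5 ^ CARD('d) * real n"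
    "real M \<le> 2 * real n powr (1 / real CARD('d))"
proof -
  define d where "d = CARD('d)"
  define s where "s = real n powr (1 / real d)"
  have s1: "1 \<le> s"
    unfolding s_def using n by (intro ge_one_powr_ge_zero) auto
  have sd: "s ^ d = real n"
    unfolding s_def using n by (intro root_powr_power) (auto simp: d_def)
  define M where "M = nat \<lceil>s\<rceil>"
  have M: "s \<le> real M" "real M \<le> s + 1"
    using s1 by (auto simp: M_def)
  have card: "real (card (cube M :: (int^'d) set)) = (2 * real M + 1) ^ d"
    by (simp add: card_cube d_def add.commute)
  have "(2::real) \<le> 2 ^ d"
    using power_increasing[of 1 d "2::real"] by (simp add: d_def Suc_le_eq)
  then have "2 * real n \<le> 2 ^ d * real n"
    by (intro mult_right_mono) auto
  also have "\<dots> = (2 * s) ^ d"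
    by (simp add: power_mult_distrib sd)
  also have "\<dots> \<le> (2 * real M + 1) ^ d"
    using s1 M by (intro power_mono) auto
  finally have lower: "2 * real n \<le> real (card (cube M :: (int^'d) set))"
    unfolding card .
  have "(2 * real M + 1) ^ d \<le> (5 * s) ^ d"
    using s1 M by (intro power_mono) auto
  then have upper: "real (card (cube M :: (int^'d) set)) \<le> 5 ^ d * real n"
    unfolding card by (simp add: power_mult_distrib sd)
  have "1 \<le> M" "real M \<le> 2 * s"
    using s1 M by auto
  then show ?thesis
    using lower upper that unfolding s_def d_def by blast
qed

lemma exists_cube_card_le:
  assumes m: "1 \<le> m"
  obtains M where "card (cube M :: (int^'d) set) \<le> m" "real m powr (1 / real CARD('d)) \<le> 3 * (real M + 1)"
proof -
  define d where "d = CARD('d)"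
  define s where "s = real m powr (1 / real d)"
  have s1: "1 \<le> s"
    unfolding s_def using m by (intro ge_one_powr_ge_zero) auto
  have sd: "s ^ d = real m"
    unfolding s_def using m by (intro root_powr_power) (auto simp: d_def)
  define M where "M = nat \<lfloor>(s - 1) / 2\<rfloor>"
  have "real M = real_of_int \<lfloor>(s - 1) / 2\<rfloor>"
    using s1 by (simp add: M_def)
  then have "real M \<le> (s - 1) / 2" "(s - 1) / 2 < real M + 1"
    using of_int_floor_le real_of_int_floor_add_one_gt by metis+
  then have M: "2 * real M + 1 \<le> s" "s \<le> 3 * (real M + 1)"
    by auto
  have "real (card (cube M :: (int^'d) set)) = (2 * real M + 1) ^ d"
    by (simp add: card_cube d_def add.commute)
  also have "\<dots> \<le> s ^ d"
    using M by (intro power_mono) auto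
  finally have "card (cube M :: (int^'d) set) \<le> m"
    using sd by linarith
  then show ?thesis
    using M that unfolding s_def d_def by blast
qed

section \<open>Best \<open>n\<close>-term approximation in \<open>S\<^sup>p\<close>\<close>

lemma Sp_norm_le_of_sums:
  assumes p: "0 < p" and sums: "\<And>F. finite F \<Longrightarrow> (\<Sum>k\<in>F. norm (fourier_coeff h k) powr p) \<le> T"
  shows "Sp_norm p h \<le> ereal (T powr (1/p))"
proof -
  have s: "(\<lambda>k. norm (fourier_coeff h k) powr p) summable_on UNIV"
    and le: "(\<Sum>\<^sub>\<infinity>k. norm (fourier_coeff h k) powr p) \<le> T"
    using nonneg_summable_on_infsum_le[of UNIV "\<lambda>k. norm (fourier_coeff h k) powr p" T] sums by auto
  have "(\<Sum>\<^sub>\<infinity>k. norm (fourier_coeff h k) powr p) powr (1/p) \<le> T powr (1/p)"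
    using le p by (intro powr_mono2 infsum_nonneg) auto
  then show ?thesis
    using s by (simp add: Sp_norm_def)
qed

lemma Sp_norm_ge_sum:
  assumes p: "0 < p" and "finite F"
  shows "ereal ((\<Sum>k\<in>F. norm (fourier_coeff h k) powr p) powr (1/p)) \<le> Sp_norm p h"
proof (cases "(\<lambda>k. norm (fourier_coeff h k) powr p) summable_on UNIV")
  case True
  then have "(\<Sum>k\<in>F. norm (fourier_coeff h k) powr p) \<le> (\<Sum>\<^sub>\<infinity>k. norm (fourier_coeff h k) powr p)"
    using assms by (intro finite_sum_le_infsum) auto
  then show ?thesis
    using True p by (simp add: Sp_norm_def powr_mono2 sum_nonneg)
qed (simp add: Sp_norm_def)

lemma best_nterm_ge:
  fixes N :: "(real^'d \<Rightarrow> complex) set"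
  assumes "f \<in> N"
    and "\<And>\<gamma> c. finite \<gamma> \<Longrightarrow> card \<gamma> = n \<Longrightarrow> ereal B \<le> Sp_norm p (\<lambda>x. f x - trig_poly \<gamma> c x)"
  shows "ereal B \<le> best_nterm p N n"
proof -
  have "ereal B \<le> (INF \<gamma>\<in>{\<gamma>. finite \<gamma> \<and> card \<gamma> = n}. INF c\<in>UNIV. Sp_norm p (\<lambda>x. f x - trig_poly \<gamma> c x))"
    using assms(2) by (auto intro!: INF_greatest)
  also have "\<dots> \<le> best_nterm p N n"
    unfolding best_nterm_def using assms(1) by (rule SUP_upper2) simp
  finally show ?thesis .
qed

lemma best_nterm_le:
  fixes N :: "(real^'d \<Rightarrow> complex) set"
  assumes "\<And>f. f \<in> N \<Longrightarrow> \<exists>\<gamma> c. finite \<gamma> \<and> card \<gamma> = n \<and> Sp_norm p (\<lambda>x. f x - trig_poly \<gamma> c x) \<le> ereal B"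
  shows "best_nterm p N n \<le> ereal B"
  unfolding best_nterm_def
proof (rule SUP_least)
  fix f assume "f \<in> N"
  then obtain \<gamma> c where "finite \<gamma>" "card \<gamma> = n" "Sp_norm p (\<lambda>x. f x - trig_poly \<gamma> c x) \<le> ereal B"
    using assms by blast
  then show "(INF \<gamma>\<in>{\<gamma>. finite \<gamma> \<and> card \<gamma> = n}. INF c\<in>UNIV. Sp_norm p (\<lambda>x. f x - trig_poly \<gamma> c x)) \<le> ereal B"
    by (intro INF_lower2[of \<gamma>] INF_lower2[of c]) auto
qed

text \<open>Approximating by the partial Fourier sum over any superset of \<open>A\<close> of size \<open>n\<close>
  leaves exactly the coefficients outside \<open>A\<close>.\<close>
lemma best_nterm_le_tail:
  fixes N :: "(real^'d \<Rightarrow> complex) set"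
  assumes p: "0 < p"
    and tail: "\<And>f. f \<in> N \<Longrightarrow> f absolutely_integrable_on torus \<and> (\<exists>A. finite A \<and> card A \<le> n \<and>
                  (\<forall>F. finite F \<longrightarrow> F \<inter> A = {} \<longrightarrow> (\<Sum>k\<in>F. norm (fourier_coeff f k) powr p) \<le> T))"
  shows "best_nterm p N n \<le> ereal (T powr (1/p))"
proof (rule best_nterm_le)
  fix f assume "f \<in> N"
  then obtain A where f: "f absolutely_integrable_on torus" and A: "finite A" "card A \<le> n"
    and tailA: "\<And>F. finite F \<Longrightarrow> F \<inter> A = {} \<Longrightarrow> (\<Sum>k\<in>F. norm (fourier_coeff f k) powr p) \<le> T"
    using tail by blast
  have "infinite (UNIV - A)"
    using A(1) infinite_UNIV_vec[OF infinite_UNIV_int] by (simp add: Diff_infinite_finite)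
  then obtain B where B: "finite B" "card B = n - card A" "B \<subseteq> UNIV - A"
    using infinite_arbitrarily_large by blast
  define \<gamma> where "\<gamma> = A \<union> B"
  have \<gamma>: "finite \<gamma>" "card \<gamma> = n"
    using A B card_Un_disjoint[of A B] by (auto simp: \<gamma>_def)
  have "(\<Sum>k\<in>F. norm (fourier_coeff (\<lambda>x. f x - trig_poly \<gamma> (fourier_coeff f) x) k) powr p) \<le> T"
    if "finite F" for F
  proof -
    have "(\<Sum>k\<in>F. norm (fourier_coeff (\<lambda>x. f x - trig_poly \<gamma> (fourier_coeff f) x) k) powr p)
            = (\<Sum>k\<in>F - \<gamma>. norm (fourier_coeff f k) powr p)"
      using that by (intro sum.mono_neutral_cong_right) (auto simp: fourier_coeff_minus_trig_poly[OF f \<gamma>(1)])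
    also have "\<dots> \<le> T"
      using that by (intro tailA) (auto simp: \<gamma>_def)
    finally show ?thesis .
  qed
  then show "\<exists>\<gamma> c. finite \<gamma> \<and> card \<gamma> = n \<and> Sp_norm p (\<lambda>x. f x - trig_poly \<gamma> c x) \<le> ereal (T powr (1/p))"
    using \<gamma> Sp_norm_le_of_sums[OF p] by blast
qed

text \<open>Any \<open>n\<close> terms leave at least \<open>card S - n\<close> of the coefficients \<open>\<alpha>\<close> untouched.\<close>
lemma best_nterm_ge_flat_poly:
  fixes S :: "(int^'d) set"
  assumes p: "0 < p" and S: "finite S" "n \<le> card S" and \<alpha>: "0 \<le> \<alpha>"
    and mem: "trig_poly S (\<lambda>_. complex_of_real \<alpha>) \<in> N"
  shows "ereal ((real (card S) - real n) powr (1/p) * \<alpha>) \<le> best_nterm p N n"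
proof (rule best_nterm_ge[OF mem])
  fix \<gamma> :: "(int^'d) set" and c assume \<gamma>: "finite \<gamma>" "card \<gamma> = n"
  define h where "h = (\<lambda>x. trig_poly S (\<lambda>_. complex_of_real \<alpha>) x - trig_poly \<gamma> c x)"
  have f: "trig_poly S (\<lambda>_. complex_of_real \<alpha>) absolutely_integrable_on torus"
    using Lper_trig_poly[OF S(1)] by (simp add: Lper_def)
  have "real (card S) - real n \<le> real (card (S - \<gamma>))"
    using diff_card_le_card_Diff[OF \<gamma>(1), of S] \<gamma>(2) by linarith
  then have "(real (card S) - real n) powr (1/p) * \<alpha> \<le> (real (card (S - \<gamma>)) * \<alpha> powr p) powr (1/p)"
    using p \<alpha> S by (simp add: powr_mult powr_powr mult_right_mono powr_mono2)
  also have "real (card (S - \<gamma>)) * \<alpha> powr p = (\<Sum>k\<in>S - \<gamma>. norm (fourier_coeff h k) powr p)"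
    using \<alpha> by (simp add: h_def fourier_coeff_minus_trig_poly[OF f \<gamma>(1)] fourier_coeff_trig_poly[OF S(1)])
  finally have "ereal ((real (card S) - real n) powr (1/p) * \<alpha>)
                 \<le> ereal ((\<Sum>k\<in>S - \<gamma>. norm (fourier_coeff h k) powr p) powr (1/p))"
    by simp
  also have "\<dots> \<le> Sp_norm p h"
    using S(1) by (intro Sp_norm_ge_sum[OF p]) simp
  finally show "ereal ((real (card S) - real n) powr (1/p) * \<alpha>) \<le> Sp_norm p h" .
qed

lemma Fclass_absolutely_integrable: "f \<in> Fclass \<psi> q r \<Longrightarrow> f absolutely_integrable_on torus"
  by (simp add: Fclass_def Lper_def)

lemma Fclass_sum_le_1:
  assumes f: "f \<in> Fclass \<psi> q r" and q: "0 < q" and "finite F"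
  shows "(\<Sum>k\<in>F. (norm (fourier_coeff f k) / psiext \<psi> (knorm r k)) powr q) \<le> 1"
proof -
  define g where "g = (\<lambda>k. (norm (fourier_coeff f k) / psiext \<psi> (knorm r k)) powr q)"
  have s: "g summable_on UNIV" and le: "infsum g UNIV powr (1/q) \<le> 1"
    using f by (auto simp: Fclass_def g_def)
  have "infsum g UNIV \<le> 1"
  proof (rule ccontr)
    assume "\<not> infsum g UNIV \<le> 1"
    then have "1 < infsum g UNIV powr (1/q)"
      using q by (intro gr_one_powr) auto
    then show False
      using le by simp
  qed
  moreover have "sum g F \<le> infsum g UNIV"
    using assms(3) by (intro finite_sum_le_infsum[OF s]) (auto simp: g_def)
  ultimately show ?thesis
    by (simp add: g_def)
qed

lemma flat_poly_in_Fclass: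
  fixes S :: "(int^'d) set"
  assumes S: "finite S" and q: "0 < q" and \<alpha>: "0 \<le> \<alpha>" and \<Psi>: "0 < \<Psi>"
    and weight: "\<And>k. k \<in> S \<Longrightarrow> \<Psi> \<le> psiext \<psi> (knorm r k)"
    and size: "real (card S) * (\<alpha> / \<Psi>) powr q \<le> 1"
  shows "trig_poly S (\<lambda>_. complex_of_real \<alpha>) \<in> Fclass \<psi> q r"
proof -
  define g where "g = (\<lambda>k. (norm (fourier_coeff (trig_poly S (\<lambda>_. complex_of_real \<alpha>)) k)
                                / psiext \<psi> (knorm r k)) powr q)"
  have g: "g k = (if k \<in> S then (\<alpha> / psiext \<psi> (knorm r k)) powr q else 0)" for k
    using \<alpha> by (simp add: g_def fourier_coeff_trig_poly[OF S])
  have "sum g F \<le> 1" if "finite F" for F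
  proof -
    have "sum g F = sum g (F \<inter> S)"
      using that by (intro sum.mono_neutral_right) (auto simp: g)
    also have "\<dots> \<le> sum g S"
      using S by (intro sum_mono2) (auto simp: g_def)
    also have "\<dots> \<le> (\<Sum>k\<in>S. (\<alpha> / \<Psi>) powr q)"
    proof (intro sum_mono)
      fix k assume "k \<in> S"
      then have "\<Psi> \<le> psiext \<psi> (knorm r k)"
        by (rule weight)
      then show "g k \<le> (\<alpha> / \<Psi>) powr q"
        using \<open>k \<in> S\<close> \<Psi> \<alpha> q by (auto simp: g intro!: powr_mono2 divide_left_mono)
    qed
    finally show ?thesis
      using size by simp
  qed
  then have "g summable_on UNIV" "infsum g UNIV \<le> 1"
    using nonneg_summable_on_infsum_le[of UNIV g 1] by (auto simp: g_def)
  moreover have "0 \<le> infsum g UNIV"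
    by (rule infsum_nonneg) (simp add: g_def)
  ultimately have "infsum g UNIV powr (1/q) \<le> 1" "g summable_on UNIV"
    using q by (auto intro: powr_le1)
  then show ?thesis
    using Lper_trig_poly[OF S] by (simp add: Fclass_def g_def)
qed

section \<open>Decreasing weights\<close>

locale decreasing_weight =
  fixes \<psi> :: "real \<Rightarrow> real"
  assumes psi_pos: "\<And>t. 1 \<le> t \<Longrightarrow> 0 < \<psi> t"
    and psi_decr: "\<And>s t. 1 \<le> s \<Longrightarrow> s \<le> t \<Longrightarrow> \<psi> t \<le> \<psi> s"
begin

lemma psiext_knorm_pos:
  fixes k :: "int^'d"
  assumes "1 \<le> r"
  shows "0 < psiext \<psi> (knorm r k)"
proof (cases "k = 0")
  case True
  then show ?thesis
    using knorm_zero[OF assms, where 'd='d] psi_pos[of 1] by (simp add: psiext_def)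
next
  case False
  then have "1 \<le> knorm r k"
    using maxnorm_ge_1[OF False] maxnorm_le_knorm[OF assms, of k] by linarith
  then show ?thesis
    using psi_pos by (simp add: psiext_def)
qed

lemma psiext_knorm_on_cube:
  fixes k :: "int^'d"
  assumes r: "1 \<le> r" and M: "1 \<le> M" and k: "k \<in> cube M"
  shows "\<psi> (real CARD('d) * real M) \<le> psiext \<psi> (knorm r k)"
proof -
  have dM: "1 \<le> real CARD('d) * real M"
    by (rule one_le_CARD_mult[OF M])
  show ?thesis
  proof (cases "k = 0")
    case True
    then show ?thesis
      using psi_decr[OF _ dM] knorm_zero[OF r, where 'd='d] by (simp add: psiext_def)
  next
    case False
    have k1: "1 \<le> knorm r k"
      using maxnorm_ge_1[OF False] maxnorm_le_knorm[OF r, of k] by linarith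
    have "knorm r k \<le> real CARD('d) * maxnorm k"
      by (rule knorm_le_maxnorm[OF r])
    also have "\<dots> \<le> real CARD('d) * real M"
      using k by (simp add: mem_cube_iff_maxnorm)
    finally show ?thesis
      using k1 psi_decr[OF k1] by (simp add: psiext_def)
  qed
qed

lemma psiext_knorm_outside_cube:
  assumes r: "1 \<le> r" and k: "k \<notin> cube M"
  shows "psiext \<psi> (knorm r k) \<le> \<psi> (maxnorm k)" "\<psi> (maxnorm k) \<le> \<psi> (real M + 1)"
proof -
  have k1: "real M + 1 \<le> maxnorm k"
    by (rule maxnorm_outside_cube[OF k])
  then have "1 \<le> maxnorm k" "maxnorm k \<le> knorm r k"
    using maxnorm_le_knorm[OF r] by auto
  then show "psiext \<psi> (knorm r k) \<le> \<psi> (maxnorm k)"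
    using psi_decr by (simp add: psiext_def)
  show "\<psi> (maxnorm k) \<le> \<psi> (real M + 1)"
    using psi_decr k1 by simp
qed

lemma norm_powr_le_normalised:
  fixes z :: complex
  assumes q: "0 < q" "q \<le> p" and r: "1 \<le> r" and k: "k \<notin> cube M"
    and small: "(norm z / psiext \<psi> (knorm r k)) powr q \<le> c"
  shows "norm z powr p \<le> c powr ((p - q) / q) * \<psi> (real M + 1) powr p * (norm z / psiext \<psi> (knorm r k)) powr q"
proof -
  define b where "b = norm z / psiext \<psi> (knorm r k)"
  have pos: "0 < psiext \<psi> (knorm r k)"
    by (rule psiext_knorm_pos[OF r])
  have "psiext \<psi> (knorm r k) \<le> \<psi> (real M + 1)"
    using psiext_knorm_outside_cube[OF r k] by linarith
  then have psi_le: "psiext \<psi> (knorm r k) powr p \<le> \<psi> (real M + 1) powr p"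
    using pos q by (intro powr_mono2) auto
  have b_le: "b powr p \<le> b powr q * c powr ((p - q) / q)"
    using small q pos by (intro powr_le_powr_mult_bound) (auto simp: b_def)
  have "norm z powr p = b powr p * psiext \<psi> (knorm r k) powr p"
    using pos by (simp add: b_def powr_divide)
  also have "\<dots> \<le> (b powr q * c powr ((p - q) / q)) * \<psi> (real M + 1) powr p"
    using psi_le b_le by (intro mult_mono) auto
  finally show ?thesis
    by (simp add: b_def mult_ac)
qed

end

locale doubling_weight = decreasing_weight +
  fixes L :: real
  assumes L_pos: "0 < L"
    and doubling: "\<And>t. 1 \<le> t \<Longrightarrow> \<psi> t \<le> L * \<psi> (2*t)"
begin

lemma doubling_iterate: "1 \<le> s \<Longrightarrow> \<psi> s \<le> L^j * \<psi> (2^j * s)"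
proof (induction j)
  case (Suc j)
  have "1 * 1 \<le> 2^j * s"
    using Suc.prems by (intro mult_mono) auto
  then have "1 \<le> 2^j * s"
    by simp
  then have "L^j * \<psi> (2^j * s) \<le> L^j * (L * \<psi> (2^Suc j * s))"
    using doubling L_pos by (intro mult_left_mono) (auto simp: mult.assoc)
  then show ?case
    using Suc by (simp add: mult_ac)
qed simp

lemma doubling_compare:
  assumes u: "1 \<le> u" and s: "1 \<le> s" "s \<le> 2^j * u"
  shows "\<psi> u \<le> L^j * \<psi> s"
proof -
  have "\<psi> u \<le> L^j * \<psi> (2^j * u)"
    by (rule doubling_iterate[OF u])
  also have "\<dots> \<le> L^j * \<psi> s"
    using L_pos by (intro mult_left_mono psi_decr s) auto
  finally show ?thesis .
qed

end

section \<open>The lower bound\<close>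

context decreasing_weight
begin

lemma best_nterm_ge_cube_poly:
  assumes p: "0 < p" and q: "0 < q" and r: "1 \<le> r" and M: "1 \<le> M"
    and n: "2 * real n \<le> real (card (cube M :: (int^'d) set))"
  shows "ereal (2 powr (-1/p) * real (card (cube M :: (int^'d) set)) powr (1/p - 1/q)
                  * \<psi> (real CARD('d) * real M))
           \<le> best_nterm p (Fclass \<psi> q r :: (real^'d \<Rightarrow> complex) set) n"
proof -
  define S where "S = (cube M :: (int^'d) set)"
  define N where "N = real (card S)"
  define \<Psi> where "\<Psi> = \<psi> (real CARD('d) * real M)"
  define \<alpha> where "\<alpha> = \<Psi> * N powr (-1/q)"
  have N: "0 < N"
    using n M by (simp add: N_def S_def card_cube)
  have \<Psi>: "0 < \<Psi>"
    unfolding \<Psi>_def by (intro psi_pos one_le_CARD_mult M)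
  have \<alpha>: "0 \<le> \<alpha>"
    using \<Psi> by (simp add: \<alpha>_def)
  have mem: "trig_poly S (\<lambda>_. complex_of_real \<alpha>) \<in> Fclass \<psi> q r"
  proof (rule flat_poly_in_Fclass)
    have "(\<alpha> / \<Psi>) powr q = N powr (-1)"
      using \<Psi> N q by (simp add: \<alpha>_def powr_powr)
    then show "real (card S) * (\<alpha> / \<Psi>) powr q \<le> 1"
      using N by (simp add: powr_minus N_def)
  qed (use \<Psi> \<alpha> q psiext_knorm_on_cube[OF r M] in \<open>auto simp: S_def finite_cube \<Psi>_def\<close>)
  have "n \<le> card S"
    using n by (simp add: S_def)
  then have best: "ereal ((N - real n) powr (1/p) * \<alpha>)
                     \<le> best_nterm p (Fclass \<psi> q r :: (real^'d \<Rightarrow> complex) set) n"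
    unfolding N_def using best_nterm_ge_flat_poly[OF p _ _ \<alpha> mem] by (simp add: S_def finite_cube)
  have "N powr (1/p - 1/q) = N powr (1/p) * N powr (-1/q)"
    using powr_add[of N "1/p" "-1/q"] by simp
  moreover have "(N / 2) powr (1/p) = N powr (1/p) / 2 powr (1/p)" "2 powr (-1/p) = 1 / 2 powr (1/p)"
    by (simp_all add: powr_divide powr_minus_divide)
  ultimately have "2 powr (-1/p) * N powr (1/p - 1/q) * \<Psi> = (N / 2) powr (1/p) * \<alpha>"
    by (simp add: \<alpha>_def)
  also have "\<dots> \<le> (N - real n) powr (1/p) * \<alpha>"
    using n N \<alpha> p by (intro mult_right_mono powr_mono2) (auto simp: N_def S_def)
  finally show ?thesis
    using order_trans[OF ereal_less_eq(3)[THEN iffD2] best] unfolding N_def S_def \<Psi>_def by blast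
qed

end

context doubling_weight
begin

lemma best_nterm_lower_bound:
  assumes p: "0 < p" and q: "0 < q" and r: "1 \<le> r"
  shows "\<exists>C>0. \<forall>n\<ge>1. ereal (C * \<psi> (real n powr (1 / real CARD('d))) * real n powr (1/p - 1/q))
                          \<le> best_nterm p (Fclass \<psi> q r :: (real^'d \<Rightarrow> complex) set) n"
proof (intro exI conjI allI impI)
  define d where "d = CARD('d)"
  define e where "e = 1/p - 1/q"
  define C where "C = 2 powr (-1/p) * min 1 ((5 ^ d) powr e) / L ^ (2*d)"
  show "0 < C"
    using L_pos by (simp add: C_def)
  fix n :: nat assume n: "1 \<le> n"
  define s where "s = real n powr (1 / real d)"
  obtain M where M: "1 \<le> M" and N: "2 * real n \<le> real (card (cube M :: (int^'d) set))"
      "real (card (cube M :: (int^'d) set)) \<le> 5 ^ d * real n" and Ms: "real M \<le> 2 * s"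
    using exists_cube_card_ge[OF n] unfolding d_def s_def by metis
  define N where "N = real (card (cube M :: (int^'d) set))"
  have s1: "1 \<le> s"
    unfolding s_def using n by (intro ge_one_powr_ge_zero) auto
  have "min 1 ((5 ^ d) powr e) * real n powr e \<le> N powr e"
    using min_powr_mult_le[of "real n" N "5 ^ d" e] n N by (simp add: N_def)
  moreover have "\<psi> s \<le> L ^ (2*d) * \<psi> (real d * real M)"
  proof (rule doubling_compare[OF s1])
    have "real d * real M \<le> real (2*d) * s"
      using mult_left_mono[OF Ms, of "real d"] by simp
    also have "\<dots> \<le> 2 ^ (2*d) * s"
    proof (rule mult_right_mono)
      show "real (2*d) \<le> 2 ^ (2*d)"
        using less_exp[of "2*d"] by (metis less_imp_le of_nat_le_iff of_nat_numeral of_nat_power)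
    qed (use s1 in auto)
    finally show "real d * real M \<le> 2 ^ (2*d) * s" .
    show "1 \<le> real d * real M"
      using one_le_CARD_mult[OF M] by (simp add: d_def)
  qed
  ultimately have "(min 1 ((5 ^ d) powr e) * real n powr e) * (\<psi> s / L ^ (2*d))
                     \<le> N powr e * \<psi> (real d * real M)"
    using L_pos psi_pos[OF s1] by (intro mult_mono) (auto simp: divide_le_eq mult.commute)
  then have "2 powr (-1/p) * ((min 1 ((5 ^ d) powr e) * real n powr e) * (\<psi> s / L ^ (2*d)))
               \<le> 2 powr (-1/p) * (N powr e * \<psi> (real d * real M))"
    by (rule mult_left_mono) simp
  then have "C * \<psi> s * real n powr e \<le> 2 powr (-1/p) * N powr e * \<psi> (real d * real M)"
    unfolding C_def by (simp add: mult_ac)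
  then show "ereal (C * \<psi> (real n powr (1 / real CARD('d))) * real n powr (1/p - 1/q))
               \<le> best_nterm p (Fclass \<psi> q r :: (real^'d \<Rightarrow> complex) set) n"
    using order_trans[OF ereal_less_eq(3)[THEN iffD2] best_nterm_ge_cube_poly[OF p q r M N(1)]]
    unfolding N_def s_def d_def e_def by blast
qed

end

section \<open>The upper bound for \<open>q \<le> p\<close>\<close>

context decreasing_weight
begin

text \<open>Besides the cube, exclude the at most \<open>m\<close> frequencies whose normalised coefficient \<open>b k\<close>
  has \<open>b k powr q > 1 / (m + 1)\<close>. Every remaining term is at most
  \<open>(m + 1) powr (-(p - q) / q) * \<psi> (M + 1) powr p * b k powr q\<close>, and the \<open>b k powr q\<close> sum to at
  most \<open>1\<close>.\<close>
lemma Fclass_tail_q_le_p: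
  fixes f :: "real^'d \<Rightarrow> complex"
  assumes q: "0 < q" "q \<le> p" and r: "1 \<le> r" and f: "f \<in> Fclass \<psi> q r"
  shows "\<exists>A. finite A \<and> card A \<le> card (cube M :: (int^'d) set) + m \<and>
           (\<forall>F. finite F \<longrightarrow> F \<inter> A = {} \<longrightarrow>
              (\<Sum>k\<in>F. norm (fourier_coeff f k) powr p) \<le> (1 / real (Suc m)) powr ((p - q) / q) * \<psi> (real M + 1) powr p)"
proof -
  define b where "b = (\<lambda>k. norm (fourier_coeff f k) / psiext \<psi> (knorm r k))"
  define t where "t = (1 / real (Suc m)) powr ((p - q) / q) * \<psi> (real M + 1) powr p"
  define G where "G = {k. 1 / real (Suc m) < b k powr q}"
  have sums: "(\<Sum>k\<in>F. b k powr q) \<le> 1" if "finite F" for F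
    using Fclass_sum_le_1[OF f q(1) that] by (simp add: b_def)
  have G: "finite G" "card G \<le> m"
    using finite_card_greater_inverse[of "\<lambda>k. b k powr q", OF sums] by (simp_all add: G_def)
  have "(\<Sum>k\<in>F. norm (fourier_coeff f k) powr p) \<le> t" if F: "finite F" "F \<inter> (cube M \<union> G) = {}" for F
  proof -
    have "norm (fourier_coeff f k) powr p \<le> t * b k powr q" if "k \<in> F" for k
      using that F(2) unfolding t_def b_def
      by (intro norm_powr_le_normalised[OF q r]) (auto simp: G_def b_def)
    then have "(\<Sum>k\<in>F. norm (fourier_coeff f k) powr p) \<le> t * (\<Sum>k\<in>F. b k powr q)"
      by (simp add: sum_distrib_left sum_mono)
    also have "\<dots> \<le> t"
      using sums[OF F(1)] by (intro mult_left_le) (auto simp: t_def sum_nonneg)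
    finally show ?thesis .
  qed
  moreover have "finite (cube M \<union> G)" "card (cube M \<union> G) \<le> card (cube M :: (int^'d) set) + m"
    using G finite_cube card_Un_le[of "cube M" G] by auto
  ultimately show ?thesis
    unfolding t_def by blast
qed

lemma best_nterm_le_q_le_p:
  assumes p: "0 < p" and q: "0 < q" "q \<le> p" and r: "1 \<le> r"
    and n: "card (cube M :: (int^'d) set) + m \<le> n"
  shows "best_nterm p (Fclass \<psi> q r :: (real^'d \<Rightarrow> complex) set) n
           \<le> ereal (real (Suc m) powr (1/p - 1/q) * \<psi> (real M + 1))"
proof -
  define e where "e = 1/p - 1/q"
  have exponent: "(p - q) / q / p = - e"
    using p q by (simp add: e_def field_simps)
  define T where "T = (1 / real (Suc m)) powr ((p - q) / q) * \<psi> (real M + 1) powr p"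
  have "best_nterm p (Fclass \<psi> q r :: (real^'d \<Rightarrow> complex) set) n \<le> ereal (T powr (1/p))"
  proof (rule best_nterm_le_tail[OF p])
    fix f :: "real^'d \<Rightarrow> complex" assume f: "f \<in> Fclass \<psi> q r"
    obtain A where "finite A" "card A \<le> card (cube M :: (int^'d) set) + m"
      "\<forall>F. finite F \<longrightarrow> F \<inter> A = {} \<longrightarrow> (\<Sum>k\<in>F. norm (fourier_coeff f k) powr p) \<le> T"
      using Fclass_tail_q_le_p[OF q r f, of M m] unfolding T_def by blast
    then show "f absolutely_integrable_on torus \<and> (\<exists>A. finite A \<and> card A \<le> n \<and>
        (\<forall>F. finite F \<longrightarrow> F \<inter> A = {} \<longrightarrow> (\<Sum>k\<in>F. norm (fourier_coeff f k) powr p) \<le> T))"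
      using Fclass_absolutely_integrable[OF f] n by (meson le_trans)
  qed
  also have "T powr (1/p) = (1 / real (Suc m)) powr ((p - q) / q / p) * \<psi> (real M + 1)"
    using p psi_pos[of "real M + 1"] by (simp add: T_def powr_mult powr_powr)
  also have "\<dots> = real (Suc m) powr e * \<psi> (real M + 1)"
    unfolding exponent by (simp add: powr_divide powr_minus_divide)
  finally show ?thesis
    by (simp only: e_def)
qed

end

context doubling_weight
begin

lemma best_nterm_upper_bound_q_le_p:
  assumes p: "0 < p" and q: "0 < q" "q \<le> p" and r: "1 \<le> r"
  shows "\<exists>C>0. \<forall>n\<ge>1. best_nterm p (Fclass \<psi> q r :: (real^'d \<Rightarrow> complex) set) n
                          \<le> ereal (C * \<psi> (real n powr (1 / real CARD('d))) * real n powr (1/p - 1/q))"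
proof (intro exI conjI allI impI)
  define e where "e = 1/p - 1/q"
  have e: "e \<le> 0"
    using p q by (simp add: e_def field_simps)
  show "0 < 2 powr (-e) * L^3"
    using L_pos by simp
  fix n :: nat assume n: "1 \<le> n"
  define m where "m = n div 2"
  define s where "s = real n powr (1 / real CARD('d))"
  have "1 \<le> n - m"
    using n unfolding m_def by presburger
  then obtain M where M: "card (cube M :: (int^'d) set) \<le> n - m"
    and Mn: "real (n - m) powr (1 / real CARD('d)) \<le> 3 * (real M + 1)"
    by (rule exists_cube_card_le)
  have "best_nterm p (Fclass \<psi> q r :: (real^'d \<Rightarrow> complex) set) n \<le> ereal (real (Suc m) powr e * \<psi> (real M + 1))"
    unfolding e_def using M by (intro best_nterm_le_q_le_p[OF p q r]) (simp add: m_def)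
  also have "real (Suc m) powr e * \<psi> (real M + 1) \<le> (2 powr (-e) * real n powr e) * (L^3 * \<psi> s)"
  proof (rule mult_mono)
    have "real (Suc m) powr e \<le> (real n / 2) powr e"
      using e n by (intro powr_mono2') (auto simp: m_def)
    then show "real (Suc m) powr e \<le> 2 powr (-e) * real n powr e"
      by (simp add: powr_divide powr_minus_divide)
    have "real n \<le> 2 * real (n - m)"
      unfolding m_def by (simp add: of_nat_diff)
    then have "s \<le> 2 powr (1 / real CARD('d)) * real (n - m) powr (1 / real CARD('d))"
      unfolding s_def by (simp add: powr_mult[symmetric] powr_mono2)
    also have "\<dots> \<le> 2 * (3 * (real M + 1))"
      using Mn powr_mono[of "1 / real CARD('d)" 1 2] by (intro mult_mono) (auto simp: Suc_le_eq)
    finally show "\<psi> (real M + 1) \<le> L^3 * \<psi> s"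
      using n unfolding s_def by (intro doubling_compare) (auto intro: ge_one_powr_ge_zero)
  qed (use psi_pos[of "real M + 1"] in auto)
  finally show "best_nterm p (Fclass \<psi> q r :: (real^'d \<Rightarrow> complex) set) n
                  \<le> ereal (2 powr (-e) * L^3 * \<psi> s * real n powr e)"
    by (simp add: mult_ac)
qed

end

section \<open>Dyadic decay of the weight\<close>

lemma convex_on_secant_le_right_derivative:
  fixes f :: "real \<Rightarrow> real"
  assumes conv: "convex_on {a<..} f" and xy: "a < x" "x < y"
    and D: "(f has_real_derivative D) (at y within {y..})"
  shows "(f y - f x) / (y - x) \<le> D"
proof (rule tendsto_lowerbound)
  show "((\<lambda>z. (f z - f y) / (z - y)) \<longlongrightarrow> D) (at y within {y..})"
    using D by (simp add: has_field_derivative_iff)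
  have "eventually (\<lambda>z. y < z) (at y within {y..})"
    unfolding eventually_at_filter by (auto intro!: always_eventually)
  then show "eventually (\<lambda>z. (f y - f x) / (y - x) \<le> (f z - f y) / (z - y)) (at y within {y..})"
  proof eventually_elim
    case (elim z)
    have I: "x \<in> {a<..}" "z \<in> {a<..}"
      using xy elim by auto
    have "(f x - f y) / (x - y) \<le> (f x - f z) / (x - z)" "(f x - f z) / (x - z) \<le> (f y - f z) / (y - z)"
      using convex_on_slope_le[OF conv I xy(2) elim] by auto
    moreover have "(f x - f y) / (x - y) = (f y - f x) / (y - x)" "(f y - f z) / (y - z) = (f z - f y) / (z - y)"
      by (metis minus_diff_eq minus_divide_divide)+
    ultimately show ?case
      by linarith
  qed
qed (simp add: at_within_Ici_at_right)

lemma right_derivative_nonpos: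
  fixes f :: "real \<Rightarrow> real"
  assumes decr: "\<And>z. y \<le> z \<Longrightarrow> f z \<le> f y" and D: "(f has_real_derivative D) (at y within {y..})"
  shows "D \<le> 0"
proof (rule tendsto_upperbound)
  show "((\<lambda>z. (f z - f y) / (z - y)) \<longlongrightarrow> D) (at y within {y..})"
    using D by (simp add: has_field_derivative_iff)
  have "eventually (\<lambda>z. y < z) (at y within {y..})"
    unfolding eventually_at_filter by (auto intro!: always_eventually)
  then show "eventually (\<lambda>z. (f z - f y) / (z - y) \<le> 0) (at y within {y..})"
    by eventually_elim (use decr in \<open>auto intro!: divide_nonpos_pos\<close>)
qed (simp add: at_within_Ici_at_right)

lemma two_root_le: "1 \<le> N \<Longrightarrow> 2 powr (1 / real N) \<le> 1 + 1 / real N"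
proof -
  assume N: "1 \<le> N"
  have b: "0 < 1 + 1 / real N"
    by (simp add: add_pos_nonneg)
  have "-1 \<le> 1 / real N"
    by (smt (verit) divide_nonneg_nonneg of_nat_0_le_iff)
  then have "2 \<le> (1 + 1 / real N) ^ N"
    using Bernoulli_inequality[of "1 / real N" N] N by simp
  then have "2 powr (1 / real N) \<le> ((1 + 1 / real N) powr real N) powr (1 / real N)"
    using b by (intro powr_mono2) (auto simp: powr_realpow)
  also have "\<dots> = 1 + 1 / real N"
    using N b by (simp add: powr_powr)
  finally show ?thesis .
qed

text \<open>The function \<open>l \<mapsto> 1 + c (1 - 1/l) - l\<^sup>c\<^sup>'\<close> vanishes at \<open>1\<close> with derivative \<open>c - c' > 0\<close>,
  so it is positive at \<open>l = 2\<^sup>1\<^sup>/\<^sup>N\<close> for large \<open>N\<close>.\<close>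
lemma exists_root_two_powr_le:
  fixes c c' :: real
  assumes c': "0 < c'" "c' < c"
  obtains N :: nat where "1 \<le> N" "(2 powr (1 / real N)) powr c' \<le> 1 + c * (1 - 1 / 2 powr (1 / real N))"
proof -
  define h where "h = (\<lambda>l::real. 1 + c * (1 - 1 / l) - l powr c')"
  have "(h has_real_derivative (c - c')) (at 1)"
    unfolding h_def by (auto intro!: derivative_eq_intros)
  then have "\<exists>\<delta>>0. \<forall>e>0. e < \<delta> \<longrightarrow> h 1 < h (1 + e)"
    using DERIV_pos_inc_right[where f = h and x = 1 and l = "c - c'"] c' by simp
  then obtain \<delta> where \<delta>: "\<delta> > 0" "\<And>e. e > 0 \<Longrightarrow> e < \<delta> \<Longrightarrow> h 1 < h (1 + e)"
    by blast
  define N where "N = nat \<lceil>1 / \<delta>\<rceil> + 1"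
  have "1 / \<delta> < real N"
    unfolding N_def by linarith
  moreover have "1 \<le> N"
    by (simp add: N_def)
  ultimately have N: "1 \<le> N" "1 / real N < \<delta>"
    using \<delta>(1) by (simp_all add: divide_less_eq field_simps)
  define l where "l = 2 powr (1 / real N)"
  have "1 < l" "l < 1 + \<delta>"
    using N two_root_le[OF N(1)] by (auto simp: l_def)
  then have "h 1 < h (1 + (l - 1))"
    using \<delta>(2)[of "l - 1"] by simp
  then show ?thesis
    using N(1) that by (simp add: h_def l_def)
qed

text \<open>A chord bound with slope \<open>c\<close> yields geometric decay of rate \<open>2\<^sup>-\<^sup>c\<^sup>'\<close> for every \<open>c' < c\<close>,
  by iterating it along the ratio \<open>l = 2\<^sup>1\<^sup>/\<^sup>N\<close>.\<close>
lemma decay_of_chord_bound: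
  fixes \<phi> :: "real \<Rightarrow> real"
  assumes chord: "\<And>x y. t0 < x \<Longrightarrow> x < y \<Longrightarrow> \<phi> y * (1 + c * (y - x) / y) \<le> \<phi> x"
    and nonneg: "\<And>x. t0 < x \<Longrightarrow> 0 \<le> \<phi> x" and t0: "0 \<le> t0" and c': "0 < c'" "c' < c"
    and x: "t0 < x"
  shows "\<phi> (2 * x) \<le> 2 powr (-c') * \<phi> x"
proof -
  obtain N :: nat where N: "1 \<le> N" and lam: "(2 powr (1 / real N)) powr c' \<le> 1 + c * (1 - 1 / 2 powr (1 / real N))"
    using exists_root_two_powr_le[OF c'] by blast
  define l where "l = 2 powr (1 / real N)"
  have l: "1 < l"
    unfolding l_def using N by simp
  have step: "\<phi> (l * y) \<le> l powr (-c') * \<phi> y" if y: "t0 < y" for y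
  proof -
    have "y < l * y"
      using l y t0 by simp
    then have "\<phi> (l * y) * l powr c' \<le> \<phi> (l * y) * (1 + c * (1 - 1 / l))"
      using lam y nonneg[of "l * y"] unfolding l_def[symmetric] by (intro mult_left_mono) auto
    also have "1 + c * (1 - 1 / l) = 1 + c * (l * y - y) / (l * y)"
      using y t0 l by (simp add: field_simps)
    also have "\<phi> (l * y) * \<dots> \<le> \<phi> y"
      using y t0 l by (intro chord) auto
    finally show ?thesis
      using l by (simp add: powr_minus divide_simps mult.commute)
  qed
  have iter: "\<phi> (l ^ j * x) \<le> (l powr (-c')) ^ j * \<phi> x" for j
  proof (induction j)
    case (Suc j)
    have "t0 < l ^ j * x"
      using l x t0 by (smt (verit) mult_le_cancel_right1 one_le_power)
    then have "\<phi> (l * (l ^ j * x)) \<le> l powr (-c') * \<phi> (l ^ j * x)"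
      by (rule step)
    also have "\<dots> \<le> l powr (-c') * ((l powr (-c')) ^ j * \<phi> x)"
      using Suc by (intro mult_left_mono) auto
    finally show ?case
      by (simp add: mult_ac)
  qed simp
  have "l ^ N = 2" "(l powr (-c')) ^ N = 2 powr (-c')"
    using N l by (simp_all add: l_def powr_realpow[symmetric] powr_powr mult.commute)
  then show ?thesis
    using iter[of N] by simp
qed

context decreasing_weight
begin

lemma powr_chord_bound:
  assumes p: "0 < p" and t0: "1 \<le> t0" and conv: "convex_on {t0<..} (\<lambda>t. \<psi> t powr p)"
    and xy: "t0 < x" "x < y"
    and D: "(\<psi> has_real_derivative D) (at y within {y..})" and K0: "K0 \<le> y * \<bar>D\<bar> / \<psi> y"
  shows "\<psi> y powr p * (1 + p * K0 * (y - x) / y) \<le> \<psi> x powr p"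
proof -
  have y: "1 \<le> y" "0 < \<psi> y"
    using xy t0 psi_pos[of y] by auto
  have "D \<le> 0"
    using psi_decr[OF y(1)] D by (rule right_derivative_nonpos)
  then have DK: "K0 * \<psi> y / y \<le> - D"
    using K0 y by (simp add: field_simps)
  have "((\<lambda>t. \<psi> t powr p) has_real_derivative (p * \<psi> y powr (p - 1)) * D) (at y within {y..})"
    by (rule DERIV_chain2[OF has_real_derivative_powr[OF y(2)] D])
  then have "(\<psi> y powr p - \<psi> x powr p) / (y - x) \<le> (p * \<psi> y powr (p - 1)) * D"
    using convex_on_secant_le_right_derivative[OF conv xy] by blast
  also have "\<dots> \<le> - (p * \<psi> y powr (p - 1)) * (K0 * \<psi> y / y)"
    using mult_left_mono[OF DK, of "p * \<psi> y powr (p - 1)"] p by simp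
  also have "\<dots> = - p * K0 * \<psi> y powr p / y"
    using powr_add[of "\<psi> y" "p - 1" 1] y by simp
  finally show ?thesis
    using xy y by (simp add: field_simps)
qed

lemma powr_doubling_decay:
  assumes p: "0 < p" and t0: "1 \<le> t0" and conv: "convex_on {t0<..} (\<lambda>t. \<psi> t powr p)"
    and der: "\<forall>t>t0. \<exists>D. (\<psi> has_real_derivative D) (at t within {t..}) \<and> t * \<bar>D\<bar> / \<psi> t \<ge> K0"
    and c: "0 < c" "c < p * K0" and x: "t0 < x"
  shows "\<psi> (2 * x) powr p \<le> 2 powr (-c) * \<psi> x powr p"
proof -
  have chord: "\<psi> y powr p * (1 + p * K0 * (y - x) / y) \<le> \<psi> x powr p" if xy: "t0 < x" "x < y" for x y
  proof -
    have "t0 < y"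
      using xy by linarith
    then obtain D where "(\<psi> has_real_derivative D) (at y within {y..})" "K0 \<le> y * \<bar>D\<bar> / \<psi> y"
      using der by blast
    then show ?thesis
      by (rule powr_chord_bound[OF p t0 conv xy])
  qed
  show ?thesis
    using decay_of_chord_bound[where \<phi>="\<lambda>t. \<psi> t powr p", OF chord _ _ c x] t0 by simp
qed

text \<open>The condition \<open>t |\<psi>'(t)| / \<psi>(t) \<ge> K\<^sub>0 > \<beta>\<close> makes \<open>\<psi>\<^sup>s\<close>, with \<open>s = pq/(q-p)\<close>, decay faster
  than \<open>t\<^sup>-\<^sup>d\<close> along dyadic steps, since \<open>\<beta> s = d\<close>.\<close>
lemma powr_dyadic_decay:
  fixes K0 :: real
  assumes p: "0 < p" and pq: "p < q" and t0: "1 \<le> t0" and conv: "convex_on {t0<..} (\<lambda>t. \<psi> t powr p)"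
    and K0: "real CARD('d::finite) * (1/p - 1/q) < K0"
    and der: "\<forall>t>t0. \<exists>D. (\<psi> has_real_derivative D) (at t within {t..}) \<and> t * \<bar>D\<bar> / \<psi> t \<ge> K0"
  obtains \<rho> where "0 < \<rho>" "2 ^ CARD('d) * \<rho> < 1"
    "\<And>x. t0 + 1 \<le> x \<Longrightarrow> \<psi> (2 * x) powr (p * q / (q - p)) \<le> \<rho> * \<psi> x powr (p * q / (q - p))"
proof -
  define \<beta> where "\<beta> = real CARD('d) * (1/p - 1/q)"
  define s where "s = p * q / (q - p)"
  define c where "c = p * (K0 + \<beta>) / 2"
  have "0 < 1/p - 1/q"
    using p pq by (simp add: field_simps)
  then have \<beta>: "0 < \<beta>"
    unfolding \<beta>_def by (intro mult_pos_pos) auto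
  have \<beta>s: "\<beta> * s = real CARD('d)"
    using p pq by (simp add: \<beta>_def s_def field_simps)
  have s: "0 < s"
    using p pq by (simp add: s_def)
  have c: "0 < c" "c < p * K0"
    using K0 \<beta> p by (simp_all add: c_def \<beta>_def)
  have decay: "\<psi> (2 * x) powr p \<le> 2 powr (-c) * \<psi> x powr p" if "t0 < x" for x
    by (rule powr_doubling_decay[OF p t0 conv der c that])
  define \<rho> where "\<rho> = 2 powr (- c * s / p)"
  have "\<psi> (2 * x) powr s \<le> \<rho> * \<psi> x powr s" if x: "t0 + 1 \<le> x" for x
  proof -
    have "\<psi> (2 * x) powr s = (\<psi> (2 * x) powr p) powr (s / p)"
      using p by (simp add: powr_powr)
    also have "\<dots> \<le> (2 powr (-c) * \<psi> x powr p) powr (s / p)"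
      using decay[of x] x s p by (intro powr_mono2) auto
    also have "\<dots> = \<rho> * \<psi> x powr s"
      using p psi_pos[of x] x t0 by (simp add: \<rho>_def powr_mult powr_powr)
    finally show ?thesis .
  qed
  moreover have "2 ^ CARD('d) * \<rho> < 1"
  proof -
    have "\<beta> * s < (K0 + \<beta>) / 2 * s"
      using K0 s by (intro mult_strict_right_mono) (auto simp: \<beta>_def)
    also have "\<dots> = c * s / p"
      using p by (simp add: c_def)
    finally have "\<beta> * s < c * s / p" .
    then have "2 powr (real CARD('d) + (- c * s / p)) < 2 powr 0"
      using \<beta>s by (intro powr_less_mono) auto
    moreover have "2 ^ CARD('d) * \<rho> = 2 powr (real CARD('d) + (- c * s / p))"
      unfolding \<rho>_def powr_add using powr_realpow[of 2 "CARD('d)"] by simp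
    ultimately show ?thesis
      by simp
  qed
  ultimately show ?thesis
    using that[of \<rho>] by (simp add: \<rho>_def s_def)
qed

lemma powr_decay_iterate:
  assumes \<rho>: "0 < \<rho>" and dec: "\<And>x. T \<le> x \<Longrightarrow> \<psi> (2 * x) powr s \<le> \<rho> * \<psi> x powr s"
    and u: "0 \<le> u" "T \<le> u"
  shows "\<psi> (2 ^ j * u) powr s \<le> \<rho> ^ j * \<psi> u powr s"
proof (induction j)
  case (Suc j)
  have "T \<le> 2 ^ j * u"
    using u by (smt (verit) mult_le_cancel_right1 one_le_power)
  then have "\<psi> (2 * (2 ^ j * u)) powr s \<le> \<rho> * \<psi> (2 ^ j * u) powr s"
    by (rule dec)
  also have "\<dots> \<le> \<rho> * (\<rho> ^ j * \<psi> u powr s)"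
    using Suc \<rho> by (intro mult_left_mono) auto
  finally show ?case
    by (simp add: mult_ac)
qed simp

text \<open>Grouping the frequencies into dyadic shells \<open>2\<^sup>j u \<le> |k|\<^sub>\<infinity> < 2\<^sup>j\<^sup>+\<^sup>1 u\<close>: the \<open>j\<close>-th shell
  has at most \<open>(5 \<cdot> 2\<^sup>j u)\<^sup>d\<close> points, each contributing at most \<open>\<rho>\<^sup>j \<psi>(u)\<^sup>s\<close>.\<close>
lemma sum_powr_dyadic_bound:
  fixes F :: "(int^'d) set"
  assumes s: "0 < s" and \<rho>: "0 < \<rho>" "2 ^ CARD('d) * \<rho> < 1"
    and dec: "\<And>x. T \<le> x \<Longrightarrow> \<psi> (2 * x) powr s \<le> \<rho> * \<psi> x powr s"
    and u: "1 \<le> u" "T \<le> real u"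
    and F: "finite F" "\<And>k. k \<in> F \<Longrightarrow> real u \<le> maxnorm k"
  shows "(\<Sum>k\<in>F. \<psi> (maxnorm k) powr s)
           \<le> 5 ^ CARD('d) * real u ^ CARD('d) * \<psi> (real u) powr s / (1 - 2 ^ CARD('d) * \<rho>)"
proof -
  define d where "d = CARD('d)"
  define \<rho>0 where "\<rho>0 = 2 ^ d * \<rho>"
  define B where "B = 5 ^ d * real u ^ d * \<psi> (real u) powr s"
  define jf where "jf = (\<lambda>k::int^'d. nat \<lfloor>log 2 (maxnorm k / real u)\<rfloor>)"
  have \<rho>0: "0 < \<rho>0" "\<rho>0 < 1"
    using \<rho> by (auto simp: \<rho>0_def d_def)
  have shell: "2 ^ jf k * real u \<le> maxnorm k" "maxnorm k < 2 ^ (jf k + 1) * real u" if "k \<in> F" for k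
    using dyadic_floor[of "real u" "maxnorm k"] u F(2)[OF that] by (simp_all add: jf_def)
  have shell_term: "\<psi> (maxnorm k) powr s \<le> \<rho> ^ jf k * \<psi> (real u) powr s" if k: "k \<in> F" for k
  proof -
    have "1 \<le> 2 ^ jf k * real u"
      using u by (smt (verit) mult_le_cancel_right1 one_le_power of_nat_1 of_nat_le_iff)
    then have "\<psi> (maxnorm k) powr s \<le> \<psi> (2 ^ jf k * real u) powr s"
      using psi_pos psi_decr shell[OF k] s by (intro powr_mono2) (auto intro: less_imp_le)
    also have "\<dots> \<le> \<rho> ^ jf k * \<psi> (real u) powr s"
      using powr_decay_iterate[OF \<rho>(1) dec] u by simp
    finally show ?thesis .
  qed
  have card: "real (card {k\<in>F. jf k = j}) \<le> 5 ^ d * real u ^ d * (2 ^ d) ^ j" for j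
    unfolding d_def using shell u by (intro card_dyadic_shell) auto
  have "(\<Sum>k\<in>F. \<psi> (maxnorm k) powr s) = (\<Sum>j\<in>jf ` F. \<Sum>k\<in>{k\<in>F. jf k = j}. \<psi> (maxnorm k) powr s)"
    by (rule sum.image_gen[OF F(1)])
  also have "\<dots> \<le> (\<Sum>j\<in>jf ` F. B * \<rho>0 ^ j)"
  proof (intro sum_mono)
    fix j
    have "(\<Sum>k\<in>{k\<in>F. jf k = j}. \<psi> (maxnorm k) powr s) \<le> real (card {k\<in>F. jf k = j}) * (\<rho> ^ j * \<psi> (real u) powr s)"
      using sum_mono[of "{k\<in>F. jf k = j}" "\<lambda>k. \<psi> (maxnorm k) powr s" "\<lambda>_. \<rho> ^ j * \<psi> (real u) powr s"]
        shell_term by force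
    also have "\<dots> \<le> (5 ^ d * real u ^ d * (2 ^ d) ^ j) * (\<rho> ^ j * \<psi> (real u) powr s)"
      using \<rho> by (intro mult_right_mono card) auto
    finally show "(\<Sum>k\<in>{k\<in>F. jf k = j}. \<psi> (maxnorm k) powr s) \<le> B * \<rho>0 ^ j"
      by (simp add: B_def \<rho>0_def power_mult_distrib mult_ac)
  qed
  also have "\<dots> = B * (\<Sum>j\<in>jf ` F. \<rho>0 ^ j)"
    by (simp add: sum_distrib_left)
  also have "\<dots> \<le> B * (1 / (1 - \<rho>0))"
    using sum_power_le_geometric[of "jf ` F" \<rho>0] F(1) \<rho>0 by (intro mult_left_mono) (auto simp: B_def)
  finally show ?thesis
    by (simp add: B_def d_def \<rho>0_def)
qed

lemma sum_powr_maxnorm_bounded: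
  fixes F :: "(int^'d) set"
  assumes s: "0 < s" and \<rho>: "0 < \<rho>" "2 ^ CARD('d) * \<rho> < 1"
    and dec: "\<And>x. T \<le> x \<Longrightarrow> \<psi> (2 * x) powr s \<le> \<rho> * \<psi> x powr s"
    and U: "1 \<le> U" "T \<le> real U"
    and F: "finite F" "\<And>k. k \<in> F \<Longrightarrow> 1 \<le> maxnorm k"
  shows "(\<Sum>k\<in>F. \<psi> (maxnorm k) powr s)
           \<le> real (card (cube (U - 1) :: (int^'d) set)) * \<psi> 1 powr s
             + 5 ^ CARD('d) * real U ^ CARD('d) * \<psi> (real U) powr s / (1 - 2 ^ CARD('d) * \<rho>)"
proof -
  define Q where "Q = (cube (U - 1) :: (int^'d) set)"
  have "(\<Sum>k\<in>F \<inter> Q. \<psi> (maxnorm k) powr s) \<le> (\<Sum>k\<in>F \<inter> Q. \<psi> 1 powr s)"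
    using F(2) psi_pos psi_decr s by (intro sum_mono powr_mono2) (auto intro: less_imp_le)
  also have "\<dots> \<le> real (card Q) * \<psi> 1 powr s"
    using finite_cube[of "U - 1"] by (auto simp: Q_def intro!: mult_right_mono card_mono)
  finally have inner: "(\<Sum>k\<in>F \<inter> Q. \<psi> (maxnorm k) powr s) \<le> real (card Q) * \<psi> 1 powr s" .
  have "real U \<le> maxnorm k" if "k \<in> F - Q" for k
    using maxnorm_outside_cube[of k "U - 1"] that U(1) by (auto simp: Q_def of_nat_diff)
  then have outer: "(\<Sum>k\<in>F - Q. \<psi> (maxnorm k) powr s)
      \<le> 5 ^ CARD('d) * real U ^ CARD('d) * \<psi> (real U) powr s / (1 - 2 ^ CARD('d) * \<rho>)"
    using F(1) by (intro sum_powr_dyadic_bound[OF s \<rho> dec U]) auto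
  have "(\<Sum>k\<in>F. \<psi> (maxnorm k) powr s)
          = (\<Sum>k\<in>F \<inter> Q. \<psi> (maxnorm k) powr s) + (\<Sum>k\<in>F - Q. \<psi> (maxnorm k) powr s)"
    by (rule sum.Int_Diff[OF F(1)])
  then show ?thesis
    using inner outer unfolding Q_def by linarith
qed

lemma sum_powr_outside_cube_bound:
  assumes s: "0 < s" and \<rho>: "0 < \<rho>" "2 ^ CARD('d) * \<rho> < 1"
    and dec: "\<And>x. T \<le> x \<Longrightarrow> \<psi> (2 * x) powr s \<le> \<rho> * \<psi> x powr s"
    and T: "1 \<le> T"
  obtains C where "0 < C"
    "\<And>M F. finite F \<Longrightarrow> F \<inter> (cube M :: (int^'d) set) = {} \<Longrightarrow>
       (\<Sum>k\<in>F. \<psi> (maxnorm k) powr s) \<le> C * (real M + 1) ^ CARD('d) * \<psi> (real M + 1) powr s"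
proof -
  define d where "d = CARD('d)"
  define A where "A = 5 ^ d / (1 - 2 ^ d * \<rho>)"
  define U where "U = nat \<lceil>T\<rceil>"
  define B where "B = real (card (cube (U - 1) :: (int^'d) set)) * \<psi> 1 powr s + A * real U ^ d * \<psi> (real U) powr s"
  define C where "C = max A (B / \<psi> (real U) powr s)"
  have A: "0 < A"
    using \<rho> by (simp add: A_def d_def)
  have U: "T \<le> real U" "1 \<le> U"
    using T by (auto simp: U_def) linarith
  have \<psi>U: "0 < \<psi> (real U) powr s"
    using psi_pos[of "real U"] U by simp
  have "(\<Sum>k\<in>F. \<psi> (maxnorm k) powr s) \<le> C * (real M + 1) ^ d * \<psi> (real M + 1) powr s"
    if F: "finite F" "F \<inter> (cube M :: (int^'d) set) = {}" for M F
  proof -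
    have F_norm: "real M + 1 \<le> maxnorm k" if "k \<in> F" for k
      using F that maxnorm_outside_cube[of k M] by auto
    have nonneg: "0 \<le> (real M + 1) ^ d * \<psi> (real M + 1) powr s"
      by simp
    show ?thesis
    proof (cases "U \<le> M + 1")
      case True
      have "(\<Sum>k\<in>F. \<psi> (maxnorm k) powr s)
              \<le> 5 ^ d * real (M + 1) ^ d * \<psi> (real (M + 1)) powr s / (1 - 2 ^ d * \<rho>)"
        unfolding d_def by (rule sum_powr_dyadic_bound[OF s \<rho> dec _ _ F(1)]) (use True U F_norm in \<open>auto simp: add.commute\<close>)
      then have "(\<Sum>k\<in>F. \<psi> (maxnorm k) powr s) \<le> A * ((real M + 1) ^ d * \<psi> (real M + 1) powr s)"
        by (simp add: A_def add.commute mult.assoc)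
      also have "\<dots> \<le> C * ((real M + 1) ^ d * \<psi> (real M + 1) powr s)"
        using nonneg by (intro mult_right_mono) (simp_all add: C_def)
      finally show ?thesis
        by (simp add: mult.assoc)
    next
      case False
      have "(\<Sum>k\<in>F. \<psi> (maxnorm k) powr s) \<le> B"
        using sum_powr_maxnorm_bounded[OF s \<rho> dec U(2) U(1) F(1)] F_norm
        by (force simp: B_def A_def d_def)
      also have "\<dots> = (B / \<psi> (real U) powr s) * \<psi> (real U) powr s"
        using \<psi>U by simp
      also have "\<dots> \<le> C * ((real M + 1) ^ d * \<psi> (real M + 1) powr s)"
      proof (intro mult_mono)
        have "\<psi> (real U) powr s \<le> \<psi> (real M + 1) powr s"
          using False psi_pos psi_decr s by (intro powr_mono2) (auto intro: less_imp_le)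
        also have "\<dots> \<le> (real M + 1) ^ d * \<psi> (real M + 1) powr s"
          by (simp add: mult_le_cancel_right1)
        finally show "\<psi> (real U) powr s \<le> (real M + 1) ^ d * \<psi> (real M + 1) powr s" .
      qed (use A in \<open>auto simp: C_def\<close>)
      finally show ?thesis
        by (simp add: mult.assoc)
    qed
  qed
  moreover have "0 < C"
    using A by (simp add: C_def)
  ultimately show ?thesis
    using that unfolding d_def by blast
qed

end

section \<open>The upper bound for \<open>p < q\<close>\<close>

context decreasing_weight
begin

lemma Fclass_tail_p_lt_q:
  fixes f :: "real^'d \<Rightarrow> complex"
  assumes p: "0 < p" and pq: "p < q" and r: "1 \<le> r" and f: "f \<in> Fclass \<psi> q r" and \<Theta>: "0 < \<Theta>"
    and weight_tail: "\<And>F. finite F \<Longrightarrow> F \<inter> (cube M :: (int^'d) set) = {} \<Longrightarrow>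
                        (\<Sum>k\<in>F. \<psi> (maxnorm k) powr (p * q / (q - p))) \<le> \<Theta>"
    and F: "finite F" "F \<inter> cube M = {}"
  shows "(\<Sum>k\<in>F. norm (fourier_coeff f k) powr p) \<le> 2 * \<Theta> powr ((q - p) / q)"
proof -
  define s where "s = p * q / (q - p)"
  define b where "b = (\<lambda>k. norm (fourier_coeff f k) / psiext \<psi> (knorm r k))"
  have q: "0 < q"
    using p pq by simp
  have "norm (fourier_coeff f k) powr p
          \<le> \<Theta> powr ((q - p) / q) * b k powr q + \<Theta> powr (- p / q) * \<psi> (maxnorm k) powr s"
    if k: "k \<in> F" for k
  proof -
    have kM: "k \<notin> cube M"
      using k F(2) by auto
    have pos: "0 < psiext \<psi> (knorm r k)"
      by (rule psiext_knorm_pos[OF r])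
    then have "norm (fourier_coeff f k) powr p = (b k * psiext \<psi> (knorm r k)) powr p"
      by (simp add: b_def)
    also have "\<dots> \<le> \<Theta> powr ((q - p) / q) * b k powr q + \<Theta> powr (- p / q) * psiext \<psi> (knorm r k) powr s"
      unfolding s_def using pos \<Theta> p pq by (intro young_powr_split) (auto simp: b_def)
    also have "psiext \<psi> (knorm r k) powr s \<le> \<psi> (maxnorm k) powr s"
      using psiext_knorm_outside_cube(1)[OF r kM] pos p pq by (intro powr_mono2) (auto simp: s_def)
    finally show ?thesis
      by (simp add: mult_left_mono)
  qed
  then have "(\<Sum>k\<in>F. norm (fourier_coeff f k) powr p)
               \<le> (\<Sum>k\<in>F. \<Theta> powr ((q - p) / q) * b k powr q + \<Theta> powr (- p / q) * \<psi> (maxnorm k) powr s)"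
    by (rule sum_mono)
  also have "\<dots> = \<Theta> powr ((q - p) / q) * (\<Sum>k\<in>F. b k powr q) + \<Theta> powr (- p / q) * (\<Sum>k\<in>F. \<psi> (maxnorm k) powr s)"
    by (simp add: sum.distrib sum_distrib_left)
  also have "\<dots> \<le> \<Theta> powr ((q - p) / q) * 1 + \<Theta> powr (- p / q) * \<Theta>"
    using Fclass_sum_le_1[OF f q F(1)] weight_tail[OF F] by (intro add_mono mult_left_mono) (auto simp: b_def s_def)
  also have "\<Theta> powr (- p / q) * \<Theta> = \<Theta> powr ((q - p) / q)"
    using \<Theta> q powr_add[of \<Theta> "- p / q" 1] by (simp add: diff_divide_distrib)
  finally show ?thesis
    by simp
qed

lemma best_nterm_le_weight_tail:
  assumes p: "0 < p" and pq: "p < q" and r: "1 \<le> r" and M: "card (cube M :: (int^'d) set) \<le> n"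
    and \<Theta>: "0 < \<Theta>"
    and weight_tail: "\<And>F. finite F \<Longrightarrow> F \<inter> (cube M :: (int^'d) set) = {} \<Longrightarrow>
                        (\<Sum>k\<in>F. \<psi> (maxnorm k) powr (p * q / (q - p))) \<le> \<Theta>"
  shows "best_nterm p (Fclass \<psi> q r :: (real^'d \<Rightarrow> complex) set) n \<le> ereal (2 powr (1/p) * \<Theta> powr (1/p - 1/q))"
proof -
  have exponent: "(q - p) / q * (1 / p) = 1/p - 1/q"
    using p pq by (simp add: field_simps)
  have "best_nterm p (Fclass \<psi> q r :: (real^'d \<Rightarrow> complex) set) n \<le> ereal ((2 * \<Theta> powr ((q - p) / q)) powr (1/p))"
  proof (rule best_nterm_le_tail[OF p])
    fix f :: "real^'d \<Rightarrow> complex" assume f: "f \<in> Fclass \<psi> q r"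
    show "f absolutely_integrable_on torus \<and> (\<exists>A. finite A \<and> card A \<le> n \<and> (\<forall>F. finite F \<longrightarrow>
        F \<inter> A = {} \<longrightarrow> (\<Sum>k\<in>F. norm (fourier_coeff f k) powr p) \<le> 2 * \<Theta> powr ((q - p) / q)))"
      using Fclass_absolutely_integrable[OF f] Fclass_tail_p_lt_q[OF p pq r f \<Theta> weight_tail] finite_cube M
      by blast
  qed
  also have "(2 * \<Theta> powr ((q - p) / q)) powr (1/p) = 2 powr (1/p) * \<Theta> powr (1/p - 1/q)"
    using \<Theta> by (simp only: powr_mult powr_powr exponent)
  finally show ?thesis .
qed

end

context doubling_weight
begin

lemma best_nterm_le_of_powr_tail:
  assumes p: "0 < p" and pq: "p < q" and r: "1 \<le> r" and Ct: "0 < Ct" and n: "1 \<le> n"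
    and tail: "\<And>M F. finite F \<Longrightarrow> F \<inter> (cube M :: (int^'d) set) = {} \<Longrightarrow>
       (\<Sum>k\<in>F. \<psi> (maxnorm k) powr (p * q / (q - p)))
         \<le> Ct * (real M + 1) ^ CARD('d) * \<psi> (real M + 1) powr (p * q / (q - p))"
  shows "best_nterm p (Fclass \<psi> q r :: (real^'d \<Rightarrow> complex) set) n
           \<le> ereal (2 powr (1/p) * Ct powr (1/p - 1/q) * L^2 * \<psi> (real n powr (1 / real CARD('d)))
                      * real n powr (1/p - 1/q))"
proof -
  define s where "s = p * q / (q - p)"
  define e where "e = 1/p - 1/q"
  have e: "0 < e" "s * e = 1"
    using p pq by (simp_all add: s_def e_def field_simps)
  obtain M where M: "card (cube M :: (int^'d) set) \<le> n"
    and Mn: "real n powr (1 / real CARD('d)) \<le> 3 * (real M + 1)"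
    using exists_cube_card_le[OF n] by blast
  define u where "u = real M + 1"
  define \<Theta> where "\<Theta> = Ct * u ^ CARD('d) * \<psi> u powr s"
  have u: "1 \<le> u" "0 < \<psi> u"
    using psi_pos[of u] by (simp_all add: u_def)
  have \<Theta>: "0 < \<Theta>"
    using Ct u by (simp add: \<Theta>_def)
  have best: "best_nterm p (Fclass \<psi> q r :: (real^'d \<Rightarrow> complex) set) n \<le> ereal (2 powr (1/p) * \<Theta> powr e)"
    unfolding e_def by (rule best_nterm_le_weight_tail[OF p pq r M \<Theta>]) (use tail in \<open>simp add: \<Theta>_def u_def s_def\<close>)
  have "\<Theta> powr e = Ct powr e * (u ^ CARD('d)) powr e * \<psi> u"
    using Ct u by (simp add: \<Theta>_def powr_mult powr_powr e(2))
  also have "\<dots> \<le> Ct powr e * real n powr e * (L^2 * \<psi> (real n powr (1 / real CARD('d))))"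
  proof (intro mult_mono)
    have "u ^ CARD('d) \<le> real (card (cube M :: (int^'d) set))"
      by (simp add: card_cube u_def power_mono)
    then show "(u ^ CARD('d)) powr e \<le> real n powr e"
      using M u e by (intro powr_mono2) auto
    show "\<psi> u \<le> L^2 * \<psi> (real n powr (1 / real CARD('d)))"
      using Mn n u by (intro doubling_compare) (auto simp: u_def intro: ge_one_powr_ge_zero)
  qed (use Ct L_pos u in auto)
  finally have "2 powr (1/p) * \<Theta> powr e
      \<le> 2 powr (1/p) * Ct powr e * L^2 * \<psi> (real n powr (1 / real CARD('d))) * real n powr e"
    by (simp add: mult_ac)
  from order_trans[OF best ereal_less_eq(3)[THEN iffD2, OF this]] show ?thesis
    unfolding e_def .
qed

lemma best_nterm_upper_bound_p_lt_q:
  fixes K0 :: real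
  assumes p: "0 < p" and pq: "p < q" and r: "1 \<le> r"
    and t0: "1 \<le> t0" and conv: "convex_on {t0<..} (\<lambda>t. \<psi> t powr p)"
    and K0: "real CARD('d) * (1/p - 1/q) < K0"
    and der: "\<forall>t>t0. \<exists>D. (\<psi> has_real_derivative D) (at t within {t..}) \<and> t * \<bar>D\<bar> / \<psi> t \<ge> K0"
  shows "\<exists>C>0. \<forall>n\<ge>1. best_nterm p (Fclass \<psi> q r :: (real^'d \<Rightarrow> complex) set) n
                          \<le> ereal (C * \<psi> (real n powr (1 / real CARD('d))) * real n powr (1/p - 1/q))"
proof -
  define s where "s = p * q / (q - p)"
  have s: "0 < s"
    using p pq by (simp add: s_def)
  obtain \<rho> where \<rho>: "0 < \<rho>" "2 ^ CARD('d) * \<rho> < 1"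
    and dec: "\<And>x. t0 + 1 \<le> x \<Longrightarrow> \<psi> (2 * x) powr s \<le> \<rho> * \<psi> x powr s"
    using powr_dyadic_decay[OF p pq t0 conv K0 der] unfolding s_def by blast
  have "1 \<le> t0 + 1"
    using t0 by simp
  then obtain Ct where Ct: "0 < Ct"
    and tail: "\<And>M F. finite F \<Longrightarrow> F \<inter> (cube M :: (int^'d) set) = {} \<Longrightarrow>
       (\<Sum>k\<in>F. \<psi> (maxnorm k) powr s) \<le> Ct * (real M + 1) ^ CARD('d) * \<psi> (real M + 1) powr s"
    using sum_powr_outside_cube_bound[where T = "t0 + 1", OF s \<rho> dec] by blast
  have "0 < 2 powr (1/p) * Ct powr (1/p - 1/q) * L^2"
    using Ct L_pos by simp
  then show ?thesis
    using best_nterm_le_of_powr_tail[OF p pq r Ct _ tail[unfolded s_def]] by blast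
qed

end

theorem mainTheorem1:
  fixes \<psi> :: "real \<Rightarrow> real" and p q :: real and r :: ereal
  assumes p_pos: "0 < p" and q_pos: "0 < q"
    and psi_pos: "\<And>t. 1 \<le> t \<Longrightarrow> 0 < \<psi> t"
    and psi_decr: "\<And>s t. 1 \<le> s \<Longrightarrow> s \<le> t \<Longrightarrow> \<psi> t \<le> \<psi> s"
    and psi_lim: "(\<psi> \<longlongrightarrow> 0) at_top"
    and delta2: "\<exists>K>0. \<forall>t\<ge>1. \<psi> t powr p \<le> K * \<psi> (2*t) powr p"
    and extra: "p < q \<Longrightarrow> (\<exists>t0\<ge>1. convex_on {t0<..} (\<lambda>t. \<psi> t powr p) \<and>
          (\<exists>K0. K0 > real CARD('d) * (1/p - 1/q) \<and>
             (\<forall>t>t0. \<exists>D. (\<psi> has_real_derivative D) (at t within {t..}) \<and>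
                     t * \<bar>D\<bar> / \<psi> t \<ge> K0)))"
    and r_ge: "1 \<le> r"
  shows "\<exists>C1>0. \<exists>C2>0. \<forall>n::nat. n \<ge> 1 \<longrightarrow>
      ereal (C1 * \<psi> (real n powr (1 / real CARD('d))) * real n powr (1/p - 1/q))
        \<le> best_nterm p (Fclass \<psi> q r :: (real^'d \<Rightarrow> complex) set) n \<and>
      best_nterm p (Fclass \<psi> q r :: (real^'d \<Rightarrow> complex) set) n
        \<le> ereal (C2 * \<psi> (real n powr (1 / real CARD('d))) * real n powr (1/p - 1/q))"
proof -
  obtain K where K: "0 < K" "\<And>t. 1 \<le> t \<Longrightarrow> \<psi> t powr p \<le> K * \<psi> (2*t) powr p"
    using delta2 by blast
  interpret doubling_weight \<psi> "K powr (1/p)"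
    by unfold_locales (use K p_pos psi_pos psi_decr in \<open>auto intro: le_root_mult_of_powr_le\<close>)
  obtain C1 where "0 < C1" "\<forall>n\<ge>1. ereal (C1 * \<psi> (real n powr (1 / real CARD('d))) * real n powr (1/p - 1/q))
                                   \<le> best_nterm p (Fclass \<psi> q r :: (real^'d \<Rightarrow> complex) set) n"
    using best_nterm_lower_bound[OF p_pos q_pos r_ge] by blast
  moreover obtain C2 where "0 < C2" "\<forall>n\<ge>1. best_nterm p (Fclass \<psi> q r :: (real^'d \<Rightarrow> complex) set) n
                                   \<le> ereal (C2 * \<psi> (real n powr (1 / real CARD('d))) * real n powr (1/p - 1/q))"
  proof (cases "q \<le> p")
    case True
    then show ?thesis
      using best_nterm_upper_bound_q_le_p[OF p_pos q_pos True r_ge] that by blast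
  next
    case False
    then have pq: "p < q"
      by simp
    then obtain t0 K0 where "1 \<le> t0" "convex_on {t0<..} (\<lambda>t. \<psi> t powr p)" "real CARD('d) * (1/p - 1/q) < K0"
      "\<forall>t>t0. \<exists>D. (\<psi> has_real_derivative D) (at t within {t..}) \<and> t * \<bar>D\<bar> / \<psi> t \<ge> K0"
      using extra by auto
    then show ?thesis
      using best_nterm_upper_bound_p_lt_q[OF p_pos pq r_ge] that by blast
  qed
  ultimately show ?thesis
    by blast
qed

end
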